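(* Let $G=\theta_{d_1,\dots,d_\ell}$ be a generalized theta graph with $\ell\ge 1$ paths and $d_i\ge 1$ for all $i$, with poles $N,S$. Suppose there is one source agent and $k\ge \ell$ ignorant agents placed on pairwise distinct nodes of $G$ (in the Broadcast model below). Then the agents have a strategy such that, for every initial placement and every behaviour of the adversary, after finitely many rounds the following configuration is reached: there is a path $P$ of $G$ such that two agents holding the message $\mathcal M$ are located on nodes of $P$ (its internal vertices or its poles), and there is an injective assignment of the remaining $\ell-1$ paths to distinct ignorant agents such that each such ignorant agent is located on a node of its assigned path.
   Context: Generalized theta graph: $\theta_{d_1,\dots,d_\ell}$ consists of two distinct fixed nodes $N,S$ (the poles) joined by $\ell$ internally vertex-disjoint paths, the $i$-th of which has exactly $d_i\ge 1$ internal nodes; the nodes of the $i$-th path are its internal nodes together with $N$ and $S$. Broadcast model: a connected base graph $G=(V,E)$ with $n$ nodes. There is one source agent holding a message $\mathcal M$ and $k\ge1$ ignorant agents (agents not holding $\mathcal M$); initially all agents occupy pairwise distinct nodes, the initial placement being chosen by the adversary. Time proceeds in synchronous rounds; in each round: (1) the adversary removes a (possibly empty) set $E'\subseteq E$ of edges such that $(V,E\setminus E')$ is connected; (2) each agent (agents have unique IDs, local memory, and see the entire current graph, the positions of all agents and which agents hold $\mathcal M$) chooses either to stay or to traverse an edge of $E\setminus E'$ incident to its current node; (3) agents move. Whenever an ignorant agent is at the same node as an agent holding $\mathcal M$, it receives $\mathcal M$ and becomes a source agent. The adversary is adaptive and knows the agents' strategy. Broadcast is solvable on $G$ with $k$ ignorant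 agents if the agents have a strategy such that, for every initial placement and every adversary behaviour, after finitely many rounds all agents hold $\mathcal M$; otherwise the adversary is said to have a winning strategy. *)

theory Defs
  imports Main
begin

text \<open>Nodes of a generalized theta graph: the poles N, S and the internal node
  IV i j = j-th internal node (1 \<le> j \<le> d i) of the i-th path (i < l).\<close>
datatype tvert = NP | SP | IV nat nat

definition theta_V :: "nat \<Rightarrow> (nat \<Rightarrow> nat) \<Rightarrow> tvert set" where
  "theta_V l d = {NP, SP} \<union> {IV i j | i j. i < l \<and> 1 \<le> j \<and> j \<le> d i}"

definition path_nodes :: "(nat \<Rightarrow> nat) \<Rightarrow> nat \<Rightarrow> tvert set" where
  "path_nodes d i = {NP, SP} \<union> {IV i j | j. 1 \<le> j \<and> j \<le> d i}"

definition theta_E :: "nat \<Rightarrow> (nat \<Rightarrow> nat) \<Rightarrow> tvert set set" where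
  "theta_E l d =
     {{NP, IV i 1} | i. i < l}
   \<union> {{IV i j, IV i (Suc j)} | i j. i < l \<and> 1 \<le> j \<and> j < d i}
   \<union> {{IV i (d i), SP} | i. i < l}"

definition connected_on :: "'v set \<Rightarrow> 'v set set \<Rightarrow> bool" where
  "connected_on V F \<longleftrightarrow> (\<forall>u\<in>V. \<forall>v\<in>V. (u, v) \<in> {(x, y). {x, y} \<in> F}\<^sup>*)"

text \<open>A (deterministic, full-information) strategy of the agents: given the history of
  positions at times 0..t and the available edge sets of rounds 1..t+1 (including the
  current one), it returns the new position of every agent.\<close>
type_synonym strategy = "(nat \<Rightarrow> tvert) list \<Rightarrow> tvert set set list \<Rightarrow> nat \<Rightarrow> tvert"

text \<open>A t = set of edges available (not removed) in round t+1.\<close>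
fun hist :: "strategy \<Rightarrow> (nat \<Rightarrow> tvert) \<Rightarrow> (nat \<Rightarrow> tvert set set) \<Rightarrow> nat \<Rightarrow> (nat \<Rightarrow> tvert) list" where
  "hist \<sigma> p0 A 0 = [p0]"
| "hist \<sigma> p0 A (Suc t) = hist \<sigma> p0 A t @ [\<sigma> (hist \<sigma> p0 A t) (map A [0..<Suc t])]"

definition pos :: "strategy \<Rightarrow> (nat \<Rightarrow> tvert) \<Rightarrow> (nat \<Rightarrow> tvert set set) \<Rightarrow> nat \<Rightarrow> nat \<Rightarrow> tvert" where
  "pos \<sigma> p0 A t = last (hist \<sigma> p0 A t)"

text \<open>Agents are 0..k; agent 0 is the source. Set of agents holding the message at time t.\<close>
fun informed :: "strategy \<Rightarrow> (nat \<Rightarrow> tvert) \<Rightarrow> (nat \<Rightarrow> tvert set set) \<Rightarrow> nat \<Rightarrow> nat \<Rightarrow> nat set" where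
  "informed \<sigma> p0 A k 0 = {0}"
| "informed \<sigma> p0 A k (Suc t) = informed \<sigma> p0 A k t \<union>
     {a. a \<le> k \<and> (\<exists>b\<in>informed \<sigma> p0 A k t. pos \<sigma> p0 A (Suc t) a = pos \<sigma> p0 A (Suc t) b)}"

definition valid_init :: "nat \<Rightarrow> (nat \<Rightarrow> nat) \<Rightarrow> nat \<Rightarrow> (nat \<Rightarrow> tvert) \<Rightarrow> bool" where
  "valid_init l d k p0 \<longleftrightarrow> inj_on p0 {0..k} \<and> (\<forall>a\<le>k. p0 a \<in> theta_V l d)"

definition valid_adversary :: "nat \<Rightarrow> (nat \<Rightarrow> nat) \<Rightarrow> (nat \<Rightarrow> tvert set set) \<Rightarrow> bool" where
  "valid_adversary l d A \<longleftrightarrow> (\<forall>t. A t \<subseteq> theta_E l d \<and> connected_on (theta_V l d) (A t))"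

definition legal_run :: "nat \<Rightarrow> strategy \<Rightarrow> (nat \<Rightarrow> tvert) \<Rightarrow> (nat \<Rightarrow> tvert set set) \<Rightarrow> bool" where
  "legal_run k \<sigma> p0 A \<longleftrightarrow> (\<forall>t. \<forall>a\<le>k.
      pos \<sigma> p0 A (Suc t) a = pos \<sigma> p0 A t a \<or>
      {pos \<sigma> p0 A t a, pos \<sigma> p0 A (Suc t) a} \<in> A t)"

definition target_config :: "nat \<Rightarrow> (nat \<Rightarrow> nat) \<Rightarrow> nat \<Rightarrow> strategy \<Rightarrow> (nat \<Rightarrow> tvert)
    \<Rightarrow> (nat \<Rightarrow> tvert set set) \<Rightarrow> nat \<Rightarrow> bool" where
  "target_config l d k \<sigma> p0 A t \<longleftrightarrow>
     (\<exists>i<l. \<exists>a b. a \<noteq> b \<and> a \<in> informed \<sigma> p0 A k t \<and> b \<in> informed \<sigma> p0 A k t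
        \<and> pos \<sigma> p0 A t a \<in> path_nodes d i \<and> pos \<sigma> p0 A t b \<in> path_nodes d i
        \<and> (\<exists>f. inj_on f ({..<l} - {i})
              \<and> (\<forall>j\<in>{..<l} - {i}. f j \<le> k \<and> f j \<notin> informed \<sigma> p0 A k t
                                  \<and> pos \<sigma> p0 A t (f j) \<in> path_nodes d j)))"

end

theory Submission
  imports Defs
begin

(* The agents play against a lexicographic potential on configurations, i.e. on the positions
   of all agents. Because the adversary must keep the graph connected, in every round some
   path of the theta graph is intact and every path misses at most one edge. From these two
   facts one shows that from every configuration in which no ignorant agent shares the node
   of the source there is a legal move which either brings ignorant agents onto the source
   in a target configuration, or strictly lowers the potential. Always playing such a move
   therefore reaches a target configuration, since the potential is well-founded. The
   injective assignment of the remaining paths is found by counting: as k \<ge> l, the paths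
   without an ignorant agent in their interior are no more than the ignorant agents waiting
   at a pole. *)

section \<open>Paths of the theta graph and connectivity\<close>

definition pnode :: "(nat \<Rightarrow> nat) \<Rightarrow> nat \<Rightarrow> nat \<Rightarrow> tvert" where
  "pnode d j m = (if m = 0 then NP else if m = Suc (d j) then SP else IV j m)"

definition pedge :: "(nat \<Rightarrow> nat) \<Rightarrow> nat \<Rightarrow> nat \<Rightarrow> tvert set" where
  "pedge d j m = {pnode d j m, pnode d j (Suc m)}"

lemma pnode_0[simp]: "pnode d j 0 = NP" by (simp add: pnode_def)

lemma pnode_Suc_length[simp]: "pnode d j (Suc (d j)) = SP" by (simp add: pnode_def)

lemma pnode_interior[simp]: "1 \<le> m \<Longrightarrow> m \<le> d j \<Longrightarrow> pnode d j m = IV j m" by (simp add: pnode_def)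

lemma pnode_in_theta_V: "j < l \<Longrightarrow> m \<le> Suc (d j) \<Longrightarrow> pnode d j m \<in> theta_V l d"
  by (auto simp: pnode_def theta_V_def)

lemma pnode_eq_NP_iff: "m \<le> Suc (d j) \<Longrightarrow> pnode d j m = NP \<longleftrightarrow> m = 0"
  by (auto simp: pnode_def)

lemma pnode_eq_SP_iff: "m \<le> Suc (d j) \<Longrightarrow> pnode d j m = SP \<longleftrightarrow> m = Suc (d j)"
  by (auto simp: pnode_def)

lemma pnode_eq_IV_iff: "m \<le> Suc (d j)
    \<Longrightarrow> pnode d j m = IV i x \<longleftrightarrow> (i = j \<and> x = m \<and> 1 \<le> m \<and> m \<le> d j)"
  by (auto simp: pnode_def)

lemma theta_E_pedge:
  assumes "e \<in> theta_E l d" "\<forall>i<l. d i \<ge> 1"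
  shows "\<exists>j m. j < l \<and> m \<le> d j \<and> e = pedge d j m"
proof -
  from assms(1) consider (a) i where "e = {NP, IV i 1}" "i < l"
    | (b) i m where "e = {IV i m, IV i (Suc m)}" "i < l" "1 \<le> m" "m < d i"
    | (c) i where "e = {IV i (d i), SP}" "i < l"
    unfolding theta_E_def by blast
  then show ?thesis
  proof cases
    case a
    then have "d i \<ge> 1" using assms(2) by blast
    then have "e = pedge d i 0" using a by (simp add: pedge_def pnode_def)
    then show ?thesis using a by blast
  next
    case b
    then have "e = pedge d i m" by (simp add: pedge_def pnode_def)
    then show ?thesis using b by (intro exI[of _ i] exI[of _ m]) simp
  next
    case c
    then have "d i \<ge> 1" using assms(2) by blast
    then have "e = pedge d i (d i)" using c by (simp add: pedge_def pnode_def)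
    then show ?thesis using c by blast
  qed
qed

lemma theta_E_endpoint_in_V:
  assumes "{x, y} \<in> theta_E l d" "\<forall>i<l. d i \<ge> 1"
  shows "y \<in> theta_V l d"
proof -
  obtain j m where "j < l" "m \<le> d j" "{x, y} = pedge d j m" using theta_E_pedge[OF assms] by blast
  then have "y = pnode d j m \<or> y = pnode d j (Suc m)" unfolding pedge_def by (auto simp: doubleton_eq_iff)
  then show ?thesis using pnode_in_theta_V \<open>j < l\<close> \<open>m \<le> d j\<close> by (metis Suc_le_mono le_SucI)
qed

definition valid_round :: "nat \<Rightarrow> (nat \<Rightarrow> nat) \<Rightarrow> tvert set set \<Rightarrow> bool" where
  "valid_round l d F \<longleftrightarrow> F \<subseteq> theta_E l d \<and> connected_on (theta_V l d) F"

lemma rtrancl_closed: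
  assumes "(x, y) \<in> R\<^sup>*" "x \<in> X" "\<And>u v. (u, v) \<in> R \<Longrightarrow> u \<in> X \<Longrightarrow> v \<in> X"
  shows "y \<in> X"
  using assms(1,2) by (induction rule: rtrancl_induct) (auto intro: assms(3))

lemma doubleton_eq_pedge_iff: "{x, y} = pedge d j m \<longleftrightarrow> (x = pnode d j m
    \<and> y = pnode d j (Suc m)) \<or> (x = pnode d j (Suc m) \<and> y = pnode d j m)"
  unfolding pedge_def by (rule doubleton_eq_iff)

lemma theta_E_IV_neighbour:
  assumes "{IV j m, y} \<in> theta_E l d" "\<forall>i<l. d i \<ge> 1"
  shows "1 \<le> m \<and> m \<le> d j \<and> j < l \<and> ((y = pnode d j (m - 1)
      \<and> {IV j m, y} = pedge d j (m - 1)) \<or> (y = pnode d j (Suc m) \<and> {IV j m, y} = pedge d j m))"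
proof -
  obtain i m' where im: "i < l" "m' \<le> d i" "{IV j m, y} = pedge d i m'" using theta_E_pedge[OF assms] by blast
  from im(3) have "(IV j m = pnode d i m' \<and> y = pnode d i (Suc m')) \<or> (IV j m = pnode d i (Suc m') \<and> y = pnode d i m')"
    by (simp add: doubleton_eq_pedge_iff)
  then show ?thesis
  proof
    assume h: "IV j m = pnode d i m' \<and> y = pnode d i (Suc m')"
    then have "i = j" "m' = m" "1 \<le> m'" "m' \<le> d i" using pnode_eq_IV_iff[of m' d i j m] im(2) by auto
    then show ?thesis using h im by auto
  next
    assume h: "IV j m = pnode d i (Suc m') \<and> y = pnode d i m'"
    then have "i = j" "Suc m' = m" "Suc m' \<le> d i" using pnode_eq_IV_iff[of "Suc m'" d i j m] im(2) by auto
    then show ?thesis using h im by (auto simp: pedge_def insert_commute)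
  qed
qed

lemma theta_E_NP_neighbour:
  assumes "{NP, y} \<in> theta_E l d" "\<forall>i<l. d i \<ge> 1"
  shows "\<exists>i<l. y = pnode d i 1 \<and> {NP, y} = pedge d i 0"
proof -
  obtain i m' where im: "i < l" "m' \<le> d i" "{NP, y} = pedge d i m'" using theta_E_pedge[OF assms] by blast
  from im(3) have "(NP = pnode d i m' \<and> y = pnode d i (Suc m')) \<or> (NP = pnode d i (Suc m') \<and> y = pnode d i m')"
    by (simp add: doubleton_eq_pedge_iff)
  then show ?thesis
  proof
    assume h: "NP = pnode d i m' \<and> y = pnode d i (Suc m')"
    then have "m' = 0" using pnode_eq_NP_iff[of m' d i] im(2) by auto
    then show ?thesis using h im by auto
  next
    assume h: "NP = pnode d i (Suc m') \<and> y = pnode d i m'"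
    then show ?thesis using pnode_eq_NP_iff[of "Suc m'" d i] im(2) by auto
  qed
qed

(* The interior nodes between two cuts of one path would be cut off from the rest. *)
lemma no_two_cuts:
  assumes F: "valid_round l d F" and dpos: "\<forall>i<l. d i \<ge> 1" and j: "j < l"
    and m: "m1 < m2" "m2 \<le> d j" and c1: "pedge d j m1 \<notin> F" and c2: "pedge d j m2 \<notin> F"
  shows False
proof -
  let ?R = "{(x, y). {x, y} \<in> F}"
  let ?X = "{IV j m | m. m1 < m \<and> m \<le> m2}"
  have cl: "v \<in> ?X" if "(u, v) \<in> ?R" "u \<in> ?X" for u v
  proof -
    from that obtain m where um: "u = IV j m" "m1 < m" "m \<le> m2" and uv: "{u, v} \<in> F" by auto
    have "{IV j m, v} \<in> theta_E l d" using uv um F unfolding valid_round_def by auto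
    from theta_E_IV_neighbour[OF this dpos] have
      "(v = pnode d j (m - 1) \<and> {IV j m, v} = pedge d j (m - 1)) \<or> (v = pnode d j (Suc m) \<and> {IV j m, v} = pedge d j m)"
      by blast
    then show ?thesis
    proof
      assume h: "v = pnode d j (m - 1) \<and> {IV j m, v} = pedge d j (m - 1)"
      have "m - 1 \<noteq> m1" using h uv um c1 by auto
      then have "m1 < m - 1" "1 \<le> m - 1" "m - 1 \<le> d j" using um m by auto
      then show ?thesis using h um by auto
    next
      assume h: "v = pnode d j (Suc m) \<and> {IV j m, v} = pedge d j m"
      have "m \<noteq> m2" using h uv um c2 by auto
      then have "Suc m \<le> m2" using um by auto
      then show ?thesis using h um m by auto
    qed
  qed
  have x0: "IV j (Suc m1) \<in> theta_V l d" "NP \<in> theta_V l d" using m j unfolding theta_V_def by auto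
  then have "(IV j (Suc m1), NP) \<in> ?R\<^sup>*" using F unfolding valid_round_def connected_on_def by blast
  moreover have "IV j (Suc m1) \<in> ?X" using m by auto
  ultimately have "NP \<in> ?X" using rtrancl_closed[of _ _ ?R ?X] cl by blast
  then show False by auto
qed

lemma cut_unique:
  assumes "valid_round l d F" "\<forall>i<l. d i \<ge> 1" "j < l" "m1 \<le> d j" "m2 \<le> d j"
    "pedge d j m1 \<notin> F" "pedge d j m2 \<notin> F"
  shows "m1 = m2"
proof (rule ccontr)
  assume "m1 \<noteq> m2"
  then consider "m1 < m2" | "m2 < m1" by linarith
  then show False
  proof cases
    case 1 then show False using no_two_cuts[OF assms(1,2,3) 1] assms by blast
  next
    case 2 then show False using no_two_cuts[OF assms(1,2,3) 2] assms by blast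
  qed
qed

(* If every path had a cut, the nodes reachable from N would stop before the first cut of
   each path and never reach S. *)
lemma intact_path_exists:
  assumes F: "valid_round l d F" and dpos: "\<forall>i<l. d i \<ge> 1"
  shows "\<exists>r<l. \<forall>m\<le>d r. pedge d r m \<in> F"
proof (rule ccontr)
  assume "\<not> ?thesis"
  then have "\<forall>r<l. \<exists>m\<le>d r. pedge d r m \<notin> F" by blast
  then obtain mc where mc: "\<And>r. r < l \<Longrightarrow> mc r \<le> d r \<and> pedge d r (mc r) \<notin> F" by metis
  let ?R = "{(x, y). {x, y} \<in> F}"
  let ?X = "insert NP {IV r m | r m. r < l \<and> 1 \<le> m \<and> m \<le> mc r}"
  have cl: "v \<in> ?X" if uvR: "(u, v) \<in> ?R" and uX: "u \<in> ?X" for u v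
  proof -
    from uvR have uv: "{u, v} \<in> F" by auto
    then have uvE: "{u, v} \<in> theta_E l d" using F unfolding valid_round_def by auto
    show ?thesis
    proof (cases "u = NP")
      case True
      then obtain i where i: "i < l" "v = pnode d i 1" "{NP, v} = pedge d i 0" using theta_E_NP_neighbour[OF _ dpos] uvE by blast
      have "mc i \<noteq> 0"
      proof
        assume "mc i = 0"
        then have "pedge d i 0 \<notin> F" using mc[OF i(1)] by simp
        then show False using i uv True by simp
      qed
      then show ?thesis using i dpos mc[OF i(1)] by auto
    next
      case False
      then obtain r m where um: "u = IV r m" "r < l" "1 \<le> m" "m \<le> mc r" using uX by auto
      from theta_E_IV_neighbour[OF _ dpos, of r m v] uvE um have
        "(v = pnode d r (m - 1) \<and> {IV r m, v} = pedge d r (m - 1)) \<or> (v = pnode d r (Suc m) \<and> {IV r m, v} = pedge d r m)"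
        by blast
      then show ?thesis
      proof
        assume h: "v = pnode d r (m - 1) \<and> {IV r m, v} = pedge d r (m - 1)"
        show ?thesis
        proof (cases "m = 1")
          case True then show ?thesis using h by simp
        next
          case False
          then have "v = IV r (m - 1)" using h um mc[OF um(2)] by auto
          then show ?thesis using um False by auto
        qed
      next
        assume h: "v = pnode d r (Suc m) \<and> {IV r m, v} = pedge d r m"
        have "m \<noteq> mc r" using h uv um mc[OF um(2)] by auto
        then have "Suc m \<le> mc r" using um by auto
        then show ?thesis using h um mc[OF um(2)] by auto
      qed
    qed
  qed
  have "NP \<in> theta_V l d" "SP \<in> theta_V l d" unfolding theta_V_def by auto
  then have "(NP, SP) \<in> ?R\<^sup>*" using F unfolding valid_round_def connected_on_def by blast
  then have "SP \<in> ?X" using rtrancl_closed[of _ _ ?R ?X] cl by blast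
  then show False by auto
qed

lemma pnode_inj: "m1 \<le> Suc (d j) \<Longrightarrow> m2 \<le> Suc (d j)
    \<Longrightarrow> pnode d j m1 = pnode d j m2 \<Longrightarrow> m1 = m2"
  by (auto simp: pnode_def split: if_splits)

lemma pnode_in_path_nodes: "m \<le> Suc (d j) \<Longrightarrow> pnode d j m \<in> path_nodes d j"
  unfolding path_nodes_def pnode_def by auto

lemma IV_in_path_nodes_iff: "IV j m \<in> path_nodes d j \<longleftrightarrow> 1 \<le> m \<and> m \<le> d j"
  unfolding path_nodes_def by auto

lemma NP_in_path_nodes[simp]: "NP \<in> path_nodes d j" unfolding path_nodes_def by auto

lemma SP_in_path_nodes[simp]: "SP \<in> path_nodes d j" unfolding path_nodes_def by auto

lemma pedge_rev: "pedge d j m \<in> F \<Longrightarrow> {pnode d j (Suc m), pnode d j m} \<in> F"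
  unfolding pedge_def by (simp add: insert_commute)

lemma pedge_fwd: "pedge d j m \<in> F \<Longrightarrow> {pnode d j m, pnode d j (Suc m)} \<in> F"
  unfolding pedge_def by simp

section \<open>Strategies that descend a potential\<close>

type_synonym conf = "nat \<Rightarrow> tvert"

definition wf_conf :: "nat \<Rightarrow> (nat \<Rightarrow> nat) \<Rightarrow> nat \<Rightarrow> conf \<Rightarrow> bool" where
  "wf_conf l d k c \<longleftrightarrow> (\<forall>a\<le>k. c a \<in> theta_V l d)
      \<and> (\<forall>a. 1 \<le> a \<and> a \<le> k \<longrightarrow> c a \<noteq> c 0)"

definition legal_move :: "nat \<Rightarrow> tvert set set \<Rightarrow> conf \<Rightarrow> conf \<Rightarrow> bool" where
  "legal_move k F c c' \<longleftrightarrow> (\<forall>a\<le>k. c' a = c a \<or> {c a, c' a} \<in> F)"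

lemma legal_moveI:
  "(\<And>a. a \<le> k \<Longrightarrow> c' a \<noteq> c a \<Longrightarrow> {c a, c' a} \<in> F) \<Longrightarrow> legal_move k F c c'"
  unfolding legal_move_def by blast

lemma legal_move_upd: "{c a, v} \<in> F \<Longrightarrow> legal_move k F c (c(a := v))"
  unfolding legal_move_def by auto

definition meet :: "nat \<Rightarrow> conf \<Rightarrow> nat set" where
  "meet k c = {a. 1 \<le> a \<and> a \<le> k \<and> c a = c 0}"

definition is_target :: "nat \<Rightarrow> (nat \<Rightarrow> nat) \<Rightarrow> nat \<Rightarrow> conf \<Rightarrow> nat set \<Rightarrow> bool"
  where
  "is_target l d k c IS \<longleftrightarrow>
     (\<exists>i<l. \<exists>a b. a \<noteq> b \<and> a \<in> IS \<and> b \<in> IS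
        \<and> c a \<in> path_nodes d i \<and> c b \<in> path_nodes d i
        \<and> (\<exists>f. inj_on f ({..<l} - {i})
              \<and> (\<forall>j\<in>{..<l} - {i}. f j \<le> k \<and> f j \<notin> IS
                                  \<and> c (f j) \<in> path_nodes d j)))"

definition good_move ::
    "nat \<Rightarrow> (nat \<Rightarrow> nat) \<Rightarrow> nat \<Rightarrow> (conf \<Rightarrow> nat) list \<Rightarrow> tvert set set \<Rightarrow> conf \<Rightarrow> conf \<Rightarrow> bool"
  where
  "good_move l d k ms F c c' \<longleftrightarrow> legal_move k F c c'
     \<and> (meet k c' = {} \<longrightarrow> (c', c) \<in> measures ms)
     \<and> (meet k c' \<noteq> {} \<longrightarrow> is_target l d k c' (insert 0 (meet k c')))"

definition descent_strategy :: "nat \<Rightarrow> (nat \<Rightarrow> nat) \<Rightarrow> nat \<Rightarrow> (conf \<Rightarrow> nat) list \<Rightarrow> strategy"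
  where
  "descent_strategy l d k ms h As = (let c = last h; F = last As in
     if \<exists>c'. good_move l d k ms F c c' then (SOME c'. good_move l d k ms F c c') else c)"

lemma pos_descent_strategy_Suc:
  "pos (descent_strategy l d k ms) p0 A (Suc t) =
     (if \<exists>c'. good_move l d k ms (A t) (pos (descent_strategy l d k ms) p0 A t) c'
      then (SOME c'. good_move l d k ms (A t) (pos (descent_strategy l d k ms) p0 A t) c')
      else pos (descent_strategy l d k ms) p0 A t)"
proof -
  have "pos \<sigma> p0 A (Suc t) = \<sigma> (hist \<sigma> p0 A t) (map A [0..<Suc t])"
    and "last (hist \<sigma> p0 A t) = pos \<sigma> p0 A t" for \<sigma>
    by (simp_all add: pos_def)
  moreover have "last (map A [0..<Suc t]) = A t" by (simp add: last_map)
  ultimately show ?thesis by (simp add: descent_strategy_def Let_def del: upt_Suc hist.simps)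
qed

lemma good_move_descent_strategy:
  assumes "\<exists>c'. good_move l d k ms (A t) (pos (descent_strategy l d k ms) p0 A t) c'"
  shows "good_move l d k ms (A t) (pos (descent_strategy l d k ms) p0 A t)
           (pos (descent_strategy l d k ms) p0 A (Suc t))"
  using assms by (simp add: pos_descent_strategy_Suc someI_ex)

lemma legal_move_descent_strategy:
  "legal_move k (A t) (pos (descent_strategy l d k ms) p0 A t) (pos (descent_strategy l d k ms) p0 A (Suc t))"
proof (cases "\<exists>c'. good_move l d k ms (A t) (pos (descent_strategy l d k ms) p0 A t) c'")
  case True
  then show ?thesis using good_move_descent_strategy good_move_def by blast
next
  case False
  then show ?thesis by (simp add: pos_descent_strategy_Suc legal_move_def)
qed

lemma legal_run_descent_strategy: "legal_run k (descent_strategy l d k ms) p0 A"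
  using legal_move_descent_strategy unfolding legal_run_def legal_move_def by blast

lemma legal_move_in_theta_V:
  assumes "legal_move k F c c'" "valid_round l d F" "\<forall>i<l. d i \<ge> 1"
    and "\<forall>a\<le>k. c a \<in> theta_V l d"
  shows "\<forall>a\<le>k. c' a \<in> theta_V l d"
proof (intro allI impI)
  fix a assume a: "a \<le> k"
  then have "c' a = c a \<or> {c a, c' a} \<in> theta_E l d"
    using assms(1,2) unfolding legal_move_def valid_round_def by blast
  then show "c' a \<in> theta_V l d" using assms(4) a theta_E_endpoint_in_V[OF _ assms(3)] by auto
qed

lemma informed_Suc_before_meeting:
  assumes "informed \<sigma> p0 A k t = {0}"
  shows "informed \<sigma> p0 A k (Suc t) = insert 0 (meet k (pos \<sigma> p0 A (Suc t)))"
proof -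
  let ?c = "pos \<sigma> p0 A (Suc t)"
  have "informed \<sigma> p0 A k (Suc t) = {0} \<union> {a. a \<le> k \<and> (\<exists>b\<in>{0}. ?c a = ?c b)}"
    using assms by (simp only: informed.simps)
  also have "\<dots> = insert 0 (meet k ?c)" unfolding meet_def by auto
  finally show ?thesis .
qed

lemma wf_conf_valid_init: "valid_init l d k p0 \<Longrightarrow> wf_conf l d k p0"
  unfolding valid_init_def wf_conf_def inj_on_def
  by (metis atLeastAtMost_iff le0 le_numeral_extra(2) not_one_le_zero)

lemma descent_strategy_reaches_target:
  assumes good: "\<And>c F. wf_conf l d k c \<Longrightarrow> valid_round l d F
      \<Longrightarrow> \<exists>c'. good_move l d k ms F c c'"
    and dpos: "\<forall>i<l. d i \<ge> 1" and init: "valid_init l d k p0" and adv: "valid_adversary l d A"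
  shows "\<exists>t. target_config l d k (descent_strategy l d k ms) p0 A t"
proof -
  let ?pos = "pos (descent_strategy l d k ms) p0 A"
  let ?informed = "informed (descent_strategy l d k ms) p0 A k"
  have round: "valid_round l d (A t)" for t using adv unfolding valid_adversary_def valid_round_def by blast
  have "\<forall>t. ?pos t = c \<longrightarrow> ?informed t = {0} \<longrightarrow> wf_conf l d k c \<longrightarrow>
          (\<exists>t'. target_config l d k (descent_strategy l d k ms) p0 A t')" for c
  proof (induction c rule: wf_induct[OF wf_measures[of ms]])
    case (1 c)
    show ?case
    proof (intro allI impI)
      fix t assume c: "?pos t = c" and uninformed: "?informed t = {0}" and wf: "wf_conf l d k c"
      have "\<exists>c'. good_move l d k ms (A t) (?pos t) c'" using good[OF _ round] wf c by simp
      then have step: "good_move l d k ms (A t) c (?pos (Suc t))"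
        unfolding c[symmetric] by (rule good_move_descent_strategy)
      have informed': "?informed (Suc t) = insert 0 (meet k (?pos (Suc t)))"
        by (rule informed_Suc_before_meeting[OF uninformed])
      show "\<exists>t'. target_config l d k (descent_strategy l d k ms) p0 A t'"
      proof (cases "meet k (?pos (Suc t)) = {}")
        case False
        then have "is_target l d k (?pos (Suc t)) (?informed (Suc t))"
          using step informed' unfolding good_move_def by simp
        then have "target_config l d k (descent_strategy l d k ms) p0 A (Suc t)"
          unfolding target_config_def is_target_def by simp
        then show ?thesis by blast
      next
        case True
        then have less: "(?pos (Suc t), c) \<in> measures ms" using step unfolding good_move_def by blast
        have "\<forall>a\<le>k. ?pos (Suc t) a \<in> theta_V l d"
          using legal_move_in_theta_V[OF _ round dpos] legal_move_descent_strategy wf c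
          unfolding wf_conf_def by blast
        then have "wf_conf l d k (?pos (Suc t))" using True unfolding wf_conf_def meet_def by blast
        then show ?thesis using 1[rule_format, OF less, of "Suc t"] True informed' by simp
      qed
    qed
  qed
  moreover have "?pos 0 = p0" by (simp add: pos_def)
  ultimately show ?thesis using wf_conf_valid_init[OF init] by simp
qed

section \<open>The potential\<close>

fun vidx :: "tvert \<Rightarrow> nat" where
  "vidx (IV i m) = m" | "vidx NP = 0" | "vidx SP = 0"

fun vpath :: "tvert \<Rightarrow> nat" where
  "vpath (IV i m) = i" | "vpath NP = 0" | "vpath SP = 0"

locale theta_broadcast =
  fixes l :: nat and d :: "nat \<Rightarrow> nat" and k :: nat
  assumes l1: "1 \<le> l" and dpos: "\<forall>i<l. 1 \<le> d i" and kl: "l \<le> k"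
begin

abbreviation Ign :: "nat set" where "Ign \<equiv> {1..k}"

definition inside :: "nat \<Rightarrow> tvert \<Rightarrow> bool" where
  "inside j v \<longleftrightarrow> (\<exists>m. 1 \<le> m \<and> m \<le> d j \<and> v = IV j m)"

definition occupants :: "conf \<Rightarrow> nat \<Rightarrow> nat set" where
  "occupants c j = {a \<in> Ign. inside j (c a)}"

definition n_occ :: "conf \<Rightarrow> nat \<Rightarrow> nat" where
  "n_occ c j = card (occupants c j)"

definition excess :: "conf \<Rightarrow> nat" where
  "excess c = (\<Sum>j<l. n_occ c j - 1)"

definition min_pos :: "conf \<Rightarrow> nat \<Rightarrow> nat" where
  "min_pos c j = Min ((\<lambda>a. vidx (c a)) ` occupants c j)"

definition max_pos :: "conf \<Rightarrow> nat \<Rightarrow> nat" where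
  "max_pos c j = Max ((\<lambda>a. vidx (c a)) ` occupants c j)"

definition pole_gap :: "conf \<Rightarrow> nat \<Rightarrow> nat" where
  "pole_gap c j = (if 2 \<le> n_occ c j then min_pos c j + (Suc (d j) - max_pos c j) else 0)"

definition total_pole_gap :: "conf \<Rightarrow> nat" where
  "total_pole_gap c = (\<Sum>j<l. pole_gap c j)"

definition at_N :: "conf \<Rightarrow> nat set" where "at_N c = {a \<in> Ign. c a = NP}"

definition at_S :: "conf \<Rightarrow> nat set" where "at_S c = {a \<in> Ign. c a = SP}"

definition at_pole :: "conf \<Rightarrow> nat set" where "at_pole c = {a \<in> Ign. c a = NP \<or> c a = SP}"

(* Ranks the configurations in which the source blocks a crowded path all of whose
   occupants sit on one node next to it; w is the node on the other side of the source. *)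
definition stall_rank :: "conf \<Rightarrow> nat" where
  "stall_rank c = (if c 0 = NP then (if \<exists>j<l. 2 \<le> n_occ c j \<and> min_pos c j = 1 \<and> max_pos c j = 1 then 1 else 0)
     else if c 0 = SP then (if \<exists>j<l. 2 \<le> n_occ c j \<and> min_pos c j = d j \<and> max_pos c j = d j then 1 else 0)
     else (let p = vpath (c 0); q = vidx (c 0) in
       if 2 \<le> n_occ c p \<and> min_pos c p = max_pos c p \<and> (min_pos c p = Suc q \<or> Suc (min_pos c p) = q) then
         (let w = 2 * q - min_pos c p in
            if w = 0 \<or> w = Suc (d p) then (if \<exists>a\<in>Ign. c a = pnode d p w then 3 else 2) else 1)
       else 0))"

definition total_length :: nat where "total_length = (\<Sum>j<l. d j)"

(* S lies deeper than every interior node, so stepping from S onto a path lowers the depth. *)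
fun depth :: "nat \<Rightarrow> tvert \<Rightarrow> nat" where
  "depth D NP = 0" | "depth D SP = Suc D" | "depth D (IV j m) = m"

definition total_depth :: "conf \<Rightarrow> nat" where "total_depth c = (\<Sum>a\<in>Ign. depth total_length (c a))"

definition above_weight :: "conf \<Rightarrow> nat" where
  "above_weight c = (\<Sum>a\<in>occupants c (vpath (c 0)). if vidx (c a) < vidx (c 0) then vidx (c a) else 0)"

definition below_gap :: "conf \<Rightarrow> nat" where
  "below_gap c = (\<Sum>a\<in>occupants c (vpath (c 0)). if vidx (c 0) < vidx (c a) then vidx (c a) - vidx (c 0) else 0)"

definition none_below :: "conf \<Rightarrow> nat" where
  "none_below c = (if \<exists>a\<in>occupants c (vpath (c 0)). vidx (c 0) < vidx (c a) then 0 else 1)"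

fun off_dist :: "nat \<Rightarrow> tvert \<Rightarrow> nat" where
  "off_dist p (IV j m) = (if j \<noteq> p then Suc (d j) - m else 0)" | "off_dist p NP = 0" | "off_dist p SP = 0"

definition total_off_dist :: "conf \<Rightarrow> nat" where
  "total_off_dist c = (\<Sum>a\<in>Ign. off_dist (vpath (c 0)) (c a))"

(* In phase 3 some path has two
   ignorant agents in its interior and the agents spread out to the poles; in phase 2 the
   source is at S and steps onto an intact path; in phase 1 it climbs its path towards N,
   while the ignorant agents arrange themselves around it; in phase 0 it waits at N and the
   ignorant agents climb towards it. *)
definition phase :: "conf \<Rightarrow> nat" where
  "phase c = (if 0 < excess c then 3 else if c 0 = SP then 2 else if c 0 = NP then 0 else 1)"

definition rank1 :: "conf \<Rightarrow> nat" where
  "rank1 c = (if phase c = 3 then excess c else if phase c = 1 then vidx (c 0)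
    else if phase c = 0 then total_depth c else 0)"

definition rank2 :: "conf \<Rightarrow> nat" where
  "rank2 c = (if phase c = 3 then total_pole_gap c else if phase c = 1 then above_weight c else 0)"

definition rank3 :: "conf \<Rightarrow> nat" where
  "rank3 c = (if phase c = 3 then stall_rank c else if phase c = 1 then card (at_N c) else 0)"

definition rank4 :: "conf \<Rightarrow> nat" where
  "rank4 c = (if phase c = 3 then card (at_pole c) else if phase c = 1 then total_off_dist c else 0)"

definition rank5 :: "conf \<Rightarrow> nat" where
  "rank5 c = (if phase c = 1 then none_below c else 0)"

definition rank6 :: "conf \<Rightarrow> nat" where
  "rank6 c = (if phase c = 1 then below_gap c else 0)"

definition potential :: "(conf \<Rightarrow> nat) list" where "potential = [phase, rank1, rank2, rank3, rank4, rank5, rank6]"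

lemma inside_IV[simp]: "inside j (IV i m) \<longleftrightarrow> i = j \<and> 1 \<le> m \<and> m \<le> d j"
  unfolding inside_def by auto

lemma not_inside_NP[simp]: "\<not> inside j NP" unfolding inside_def by auto

lemma not_inside_SP[simp]: "\<not> inside j SP" unfolding inside_def by auto

lemma insideD: "inside j v \<Longrightarrow> v = IV j (vidx v) \<and> 1 \<le> vidx v \<and> vidx v \<le> d j"
  unfolding inside_def by auto

lemma inside_unique: "inside j v \<Longrightarrow> inside j' v \<Longrightarrow> j = j'"
  unfolding inside_def by auto

lemma wf_conf_cases:
  assumes "wf_conf l d k c" "a \<le> k"
  shows "c a = NP \<or> c a = SP \<or> (\<exists>j<l. inside j (c a))"
  using assms unfolding wf_conf_def theta_V_def by auto

lemma wf_conf_not_on_source: "wf_conf l d k c \<Longrightarrow> a \<in> Ign \<Longrightarrow> c a \<noteq> c 0"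
  unfolding wf_conf_def by auto

lemma occupants_subset: "occupants c j \<subseteq> Ign" unfolding occupants_def by auto

lemma finite_occupants[simp]: "finite (occupants c j)" using occupants_subset finite_subset by blast

lemma occupants_disjoint: "j \<noteq> j' \<Longrightarrow> occupants c j \<inter> occupants c j' = {}"
  unfolding occupants_def using inside_unique by blast

lemma finite_at_pole[simp]: "finite (at_pole c)" unfolding at_pole_def by auto

lemma finite_at_N[simp]: "finite (at_N c)" unfolding at_N_def by auto

lemma finite_at_S[simp]: "finite (at_S c)" unfolding at_S_def by auto

lemma at_pole_eq_Un: "at_pole c = at_N c \<union> at_S c" unfolding at_pole_def at_N_def at_S_def by auto

lemma at_N_at_S_disjoint: "at_N c \<inter> at_S c = {}" unfolding at_N_def at_S_def by auto

lemma card_at_pole_plus_occupants: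
  assumes "wf_conf l d k c"
  shows "k = card (at_pole c) + (\<Sum>j<l. n_occ c j)"
proof -
  have U: "Ign = at_pole c \<union> (\<Union>j<l. occupants c j)"
  proof
    show "Ign \<subseteq> at_pole c \<union> (\<Union>j<l. occupants c j)"
    proof
      fix a assume a: "a \<in> Ign"
      then have "a \<le> k" by simp
      from wf_conf_cases[OF assms this] show "a \<in> at_pole c \<union> (\<Union>j<l. occupants c j)"
        using a unfolding at_pole_def occupants_def by auto
    qed
    show "at_pole c \<union> (\<Union>j<l. occupants c j) \<subseteq> Ign" unfolding at_pole_def occupants_def by auto
  qed
  have D: "at_pole c \<inter> (\<Union>j<l. occupants c j) = {}" unfolding at_pole_def occupants_def by auto
  have "card (\<Union>j<l. occupants c j) = (\<Sum>j<l. card (occupants c j))"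
    by (rule card_UN_disjoint) (auto dest: occupants_disjoint)
  then have "card Ign = card (at_pole c) + (\<Sum>j<l. n_occ c j)"
    unfolding n_occ_def using U D by (simp add: card_Un_disjoint)
  then show ?thesis by simp
qed

lemma occupant_position: "a \<in> occupants c j
    \<Longrightarrow> 1 \<le> vidx (c a) \<and> vidx (c a) \<le> d j \<and> c a = IV j (vidx (c a))"
  unfolding occupants_def using insideD by blast

lemma min_pos_le: "a \<in> occupants c j \<Longrightarrow> min_pos c j \<le> vidx (c a)"
  unfolding min_pos_def by (rule Min_le) auto

lemma max_pos_ge: "a \<in> occupants c j \<Longrightarrow> vidx (c a) \<le> max_pos c j"
  unfolding max_pos_def by (rule Max_ge) auto

lemma min_pos_attained: "occupants c j \<noteq> {} \<Longrightarrow> \<exists>a\<in>occupants c j. vidx (c a) = min_pos c j"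
proof -
  assume "occupants c j \<noteq> {}"
  then have "min_pos c j \<in> (\<lambda>a. vidx (c a)) ` occupants c j" unfolding min_pos_def by (intro Min_in) auto
  then show ?thesis by auto
qed

lemma max_pos_attained: "occupants c j \<noteq> {} \<Longrightarrow> \<exists>a\<in>occupants c j. vidx (c a) = max_pos c j"
proof -
  assume "occupants c j \<noteq> {}"
  then have "max_pos c j \<in> (\<lambda>a. vidx (c a)) ` occupants c j" unfolding max_pos_def by (intro Max_in) auto
  then show ?thesis by auto
qed

lemma min_posI: "a \<in> occupants c j \<Longrightarrow> vidx (c a) = x
    \<Longrightarrow> (\<And>b. b \<in> occupants c j \<Longrightarrow> x \<le> vidx (c b)) \<Longrightarrow> min_pos c j = x"
  unfolding min_pos_def by (rule Min_eqI) auto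

lemma max_posI: "a \<in> occupants c j \<Longrightarrow> vidx (c a) = x
    \<Longrightarrow> (\<And>b. b \<in> occupants c j \<Longrightarrow> vidx (c b) \<le> x) \<Longrightarrow> max_pos c j = x"
  unfolding max_pos_def by (rule Max_eqI) auto

lemma excess_eq_0_iff: "excess c = 0 \<longleftrightarrow> (\<forall>j<l. n_occ c j \<le> 1)"
  unfolding excess_def by auto

lemma sum_update_one:
  fixes f g :: "nat \<Rightarrow> nat"
  assumes "j < l" "\<And>x. x < l \<Longrightarrow> x \<noteq> j \<Longrightarrow> g x = f x"
  shows "(\<Sum>x<l. g x) + f j = (\<Sum>x<l. f x) + g j"
proof -
  have "(\<Sum>x<l. g x) = g j + (\<Sum>x\<in>{..<l} - {j}. g x)" using assms(1) by (simp add: sum.remove)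
  moreover have "(\<Sum>x<l. f x) = f j + (\<Sum>x\<in>{..<l} - {j}. f x)" using assms(1) by (simp add: sum.remove)
  moreover have "(\<Sum>x\<in>{..<l} - {j}. g x) = (\<Sum>x\<in>{..<l} - {j}. f x)" using assms(2) by (intro sum.cong) auto
  ultimately show ?thesis by simp
qed

lemma sum_update_agent:
  fixes f :: "nat \<Rightarrow> nat"
  assumes "a \<in> Ign" "\<And>x. x \<in> Ign \<Longrightarrow> x \<noteq> a \<Longrightarrow> g x = f x"
  shows "(\<Sum>x\<in>Ign. g x) + f a = (\<Sum>x\<in>Ign. f x) + g a"
proof -
  have "(\<Sum>x\<in>Ign. g x) = g a + (\<Sum>x\<in>Ign - {a}. g x)" using assms(1) by (simp add: sum.remove)
  moreover have "(\<Sum>x\<in>Ign. f x) = f a + (\<Sum>x\<in>Ign - {a}. f x)" using assms(1) by (simp add: sum.remove)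
  moreover have "(\<Sum>x\<in>Ign - {a}. g x) = (\<Sum>x\<in>Ign - {a}. f x)" using assms(2) by (intro sum.cong) auto
  ultimately show ?thesis by simp
qed

lemma inside_in_path_nodes: "inside j v \<Longrightarrow> v \<in> path_nodes d j" unfolding inside_def path_nodes_def by auto

lemma path_nodes_not_inside_other: "v \<in> path_nodes d j \<Longrightarrow> j' \<noteq> j \<Longrightarrow> \<not> inside j' v"
  unfolding path_nodes_def inside_def by auto

lemma occupants_upd: "occupants (c(a := v)) j = (occupants c j - {a}) \<union> (if a \<in> Ign \<and> inside j v then {a} else {})"
  unfolding occupants_def by auto

lemma occupants_upd_same_path: "a \<in> occupants c j \<Longrightarrow> inside j v
    \<Longrightarrow> occupants (c(a := v)) j' = occupants c j'"
  unfolding occupants_def using inside_unique by auto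

lemma occupants_upd_source: "occupants (c(0 := v)) j = occupants c j"
  unfolding occupants_def by auto

lemma excess_cong: "(\<And>j. j < l \<Longrightarrow> n_occ c' j = n_occ c j) \<Longrightarrow> excess c' = excess c"
  unfolding excess_def by simp

lemma length_le_total_length: "j < l \<Longrightarrow> d j \<le> total_length"
  unfolding total_length_def by (rule member_le_sum) auto

lemma source_inside:
  assumes "wf_conf l d k c" "c 0 \<noteq> NP" "c 0 \<noteq> SP"
  shows "\<exists>p q. c 0 = IV p q \<and> p < l \<and> 1 \<le> q \<and> q \<le> d p"
proof -
  obtain j where "j < l" "inside j (c 0)" using wf_conf_cases[OF assms(1), of 0] assms(2,3) by auto
  then show ?thesis using insideD by blast
qed

lemma occupants_at_most_one:
  assumes "excess c = 0" "j < l"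
  shows "occupants c j = {} \<or> (\<exists>y. occupants c j = {y})"
proof (cases "occupants c j = {}")
  case False
  then obtain y where y: "y \<in> occupants c j" by blast
  have "n_occ c j \<le> 1" using assms excess_eq_0_iff by blast
  then have "\<forall>a\<in>occupants c j. \<forall>b\<in>occupants c j. a = b" unfolding n_occ_def
    using card_le_Suc0_iff_eq[of "occupants c j"] by simp
  then have "occupants c j = {y}" using y by blast
  then show ?thesis by blast
qed simp

lemma meet_empty: "(\<And>g. g \<in> Ign \<Longrightarrow> c' g \<noteq> c' 0) \<Longrightarrow> meet k c' = {}"
  unfolding meet_def by auto

lemma source_path_weights_cong:
  assumes "c' 0 = c 0" "occupants c' (vpath (c 0)) = occupants c (vpath (c 0))"
    "\<And>a. a \<in> occupants c (vpath (c 0)) \<Longrightarrow> c' a = c a"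
  shows "above_weight c' = above_weight c" "none_below c' = none_below c" "below_gap c' = below_gap c"
  unfolding above_weight_def none_below_def below_gap_def using assms by (auto intro!: sum.cong)

lemma at_N_upd: "at_N (c(g := v)) = (at_N c - {g}) \<union> (if g \<in> Ign \<and> v = NP then {g} else {})"
  unfolding at_N_def by auto

lemma total_off_dist_upd:
  assumes "g \<in> Ign" "c' = c(g := v)" "c' 0 = c 0"
  shows "total_off_dist c' + off_dist (vpath (c 0)) (c g) = total_off_dist c + off_dist (vpath (c 0)) v"
proof -
  have "total_off_dist c' = (\<Sum>a\<in>Ign. off_dist (vpath (c 0)) (c' a))" unfolding total_off_dist_def using assms(3) by simp
  moreover have "(\<Sum>a\<in>Ign. off_dist (vpath (c 0)) (c' a)) + off_dist (vpath (c 0)) (c g)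
      = (\<Sum>a\<in>Ign. off_dist (vpath (c 0)) (c a)) + off_dist (vpath (c 0)) (c' g)"
    by (rule sum_update_agent[OF assms(1)]) (simp add: assms(2))
  ultimately show ?thesis unfolding total_off_dist_def using assms(2) by simp
qed

lemma phase_source_inside: "excess c = 0 \<Longrightarrow> c 0 = IV p q \<Longrightarrow> phase c = 1"
  unfolding phase_def by simp

lemma meet_upd: "wf_conf l d k c \<Longrightarrow> y \<in> Ign \<Longrightarrow> meet k (c(y := v)) = (if v = c 0 then {y} else {})"
  unfolding meet_def wf_conf_def by auto

lemma meet_upd_source: "meet k (c(0 := v)) = {g \<in> Ign. c g = v}"
  unfolding meet_def by auto

lemma occupant_Ign: "a \<in> occupants c j \<Longrightarrow> a \<in> Ign" unfolding occupants_def by auto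

lemma occupant_nonzero: "a \<in> occupants c j \<Longrightarrow> a \<noteq> 0" unfolding occupants_def by auto

lemma path_stats_cong:
  assumes "occupants c' j = occupants c j" "\<And>a. a \<in> occupants c j \<Longrightarrow> c' a = c a"
  shows "min_pos c' j = min_pos c j" "max_pos c' j = max_pos c j" "n_occ c' j = n_occ c j" "pole_gap c' j = pole_gap c j"
proof -
  have "(\<lambda>a. vidx (c' a)) ` occupants c' j = (\<lambda>a. vidx (c a)) ` occupants c j" using assms by auto
  then show "min_pos c' j = min_pos c j" "max_pos c' j = max_pos c j" unfolding min_pos_def max_pos_def by simp_all
  show "n_occ c' j = n_occ c j" unfolding n_occ_def using assms by simp
  then show "pole_gap c' j = pole_gap c j" unfolding pole_gap_def
    using \<open>min_pos c' j = min_pos c j\<close> \<open>max_pos c' j = max_pos c j\<close> by simp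
qed

lemma excess_total_pole_gap_cong:
  assumes other: "\<And>x. x \<noteq> r \<Longrightarrow> occupants c' x = occupants c x"
    and same: "\<And>a x. a \<in> occupants c x \<Longrightarrow> x \<noteq> r \<Longrightarrow> c' a = c a"
    and "n_occ c r \<le> 1" "n_occ c' r \<le> 1"
  shows "excess c' = excess c \<and> total_pole_gap c' = total_pole_gap c"
proof -
  have "n_occ c' x - 1 = n_occ c x - 1 \<and> pole_gap c' x = pole_gap c x" for x
  proof (cases "x = r")
    case True
    then show ?thesis using assms(3,4) unfolding pole_gap_def by simp
  next
    case False
    then show ?thesis using path_stats_cong[OF other[OF False] same[OF _ False]] by simp
  qed
  then show ?thesis unfolding excess_def total_pole_gap_def by simp
qed

lemma total_pole_gap_less:
  assumes "j < l" "\<And>x. x < l \<Longrightarrow> x \<noteq> j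
      \<Longrightarrow> pole_gap c' x = pole_gap c x" "pole_gap c' j < pole_gap c j"
  shows "total_pole_gap c' < total_pole_gap c"
  using sum_update_one[of j "pole_gap c'" "pole_gap c", OF assms(1,2)] assms(3) unfolding total_pole_gap_def by simp

lemma excess_less:
  assumes "j < l" "\<And>x. x < l \<Longrightarrow> x \<noteq> j
      \<Longrightarrow> n_occ c' x = n_occ c x" "1 \<le> n_occ c' j" "n_occ c' j < n_occ c j"
  shows "excess c' < excess c"
proof -
  have "(\<Sum>x<l. n_occ c' x - 1) + (n_occ c j - 1) = (\<Sum>x<l. n_occ c x - 1) + (n_occ c' j - 1)"
    by (rule sum_update_one[OF assms(1)]) (simp add: assms(2))
  then show ?thesis unfolding excess_def using assms(3,4) by linarith
qed

lemma crowded_nonempty: "2 \<le> n_occ c j \<Longrightarrow> occupants c j \<noteq> {}"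
  unfolding n_occ_def by auto

lemma min_pos_le_max_pos: "occupants c j \<noteq> {} \<Longrightarrow> min_pos c j \<le> max_pos c j"
  using min_pos_attained max_pos_ge min_pos_le by (metis le_trans)

lemma min_max_pos_range: "occupants c j \<noteq> {} \<Longrightarrow> 1 \<le> min_pos c j \<and> max_pos c j \<le> d j"
  using min_pos_attained max_pos_attained occupant_position by metis

lemma crowded_other_occupant: "2 \<le> n_occ c j \<Longrightarrow> a \<in> occupants c j
    \<Longrightarrow> \<exists>b\<in>occupants c j. b \<noteq> a"
  unfolding n_occ_def
  by (metis card_1_singletonE card_le_Suc0_iff_eq finite_occupants le_SucE not_less_eq_eq
      numeral_2_eq_2 singletonI)

lemma stall_rank_le_3: "stall_rank c \<le> 3"
  unfolding stall_rank_def Let_def by auto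

lemma stall_rank_pole: "c 0 = NP \<or> c 0 = SP \<Longrightarrow> stall_rank c \<le> 1"
  unfolding stall_rank_def by auto

lemma stall_rank_inside: "c 0 = IV p q \<Longrightarrow> stall_rank c = (if 2 \<le> n_occ c p
    \<and> min_pos c p = max_pos c p \<and> (min_pos c p = Suc q \<or> Suc (min_pos c p) = q) then
         (let w = 2 * q - min_pos c p in
            if w = 0 \<or> w = Suc (d p) then (if \<exists>a\<in>Ign. c a = pnode d p w then 3 else 2) else 1)
       else 0)"
  unfolding stall_rank_def by simp

lemma excess_pos_crowded: "0 < excess c \<Longrightarrow> \<exists>j<l. 2 \<le> n_occ c j"
proof (rule ccontr)
  assume "0 < excess c" "\<not> (\<exists>j<l. 2 \<le> n_occ c j)"
  then have "\<forall>j<l. n_occ c j \<le> 1" by auto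
  then have "excess c = 0" using excess_eq_0_iff by blast
  then show False using \<open>0 < excess c\<close> by simp
qed

lemma at_pole_upd: "at_pole (c(g := v)) = (at_pole c - {g}) \<union> (if g \<in> Ign \<and> (v = NP \<or> v = SP) then {g} else {})"
  unfolding at_pole_def by auto

lemma total_pole_gap_excess_cong: "(\<And>a. a \<in> Ign \<Longrightarrow> c' a = c a)
    \<Longrightarrow> total_pole_gap c' = total_pole_gap c \<and> excess c' = excess c"
proof -
  assume h: "\<And>a. a \<in> Ign \<Longrightarrow> c' a = c a"
  have occ_eq: "occupants c' j = occupants c j" for j unfolding occupants_def using h by auto
  have "min_pos c' j = min_pos c j \<and> max_pos c' j = max_pos c j \<and> n_occ c' j = n_occ c j
      \<and> pole_gap c' j = pole_gap c j" for j
    using path_stats_cong[OF occ_eq, of j] h occupant_Ign by blast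
  then show ?thesis unfolding total_pole_gap_def excess_def by simp
qed

section \<open>Target configurations by counting\<close>

lemma is_targetI:
  assumes i: "i < l" and ab: "a \<noteq> b" "a \<in> IS" "b \<in> IS" "c a \<in> path_nodes d i" "c b \<in> path_nodes d i"
    and cnt: "card {j. j < l \<and> j \<noteq> i \<and> (\<forall>g\<in>Ign - IS. \<not> inside j (c g))}
              \<le> card {g \<in> Ign - IS. c g = NP \<or> c g = SP}"
  shows "is_target l d k c IS"
proof -
  let ?U = "{j. j < l \<and> j \<noteq> i \<and> (\<forall>g\<in>Ign - IS. \<not> inside j (c g))}"
  let ?P = "{g \<in> Ign - IS. c g = NP \<or> c g = SP}"
  obtain h where h: "h ` ?U \<subseteq> ?P" "inj_on h ?U" using card_le_inj[OF _ _ cnt] by auto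
  define f where "f j = (if j \<in> ?U then h j else (SOME g. g \<in> Ign - IS \<and> inside j (c g)))" for j
  have pole: "f j \<in> ?P" if "j \<in> ?U" for j using that h unfolding f_def by auto
  have interior: "f j \<in> Ign - IS \<and> inside j (c (f j))" if "j < l" "j \<noteq> i" "j \<notin> ?U" for j
  proof -
    have ex: "\<exists>g. g \<in> Ign - IS \<and> inside j (c g)" using that by auto
    have "f j = (SOME g. g \<in> Ign - IS \<and> inside j (c g))"
      unfolding f_def using that(3) by (simp only: if_False)
    then show ?thesis using someI_ex[OF ex] by simp
  qed
  have at_pole: "c (f j) = NP \<or> c (f j) = SP" if "j \<in> ?U" for j using pole[OF that] by auto
  have inside_path: "inside j (c (f j))" if "j \<in> {..<l} - {i}" "j \<notin> ?U" for j
    using interior that by auto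
  have "inj_on f ({..<l} - {i})"
  proof (rule inj_onI)
    fix x y assume x: "x \<in> {..<l} - {i}" and y: "y \<in> {..<l} - {i}" and e: "f x = f y"
    consider "x \<in> ?U" "y \<in> ?U" | "x \<notin> ?U" "y \<notin> ?U" | "x \<in> ?U" "y \<notin> ?U" | "x \<notin> ?U" "y \<in> ?U"
      by blast
    then show "x = y"
    proof cases
      case 1
      then show ?thesis using e h(2) unfolding f_def by (auto dest: inj_onD)
    next
      case 2
      have "inside x (c (f x))" using inside_path[OF x] 2 by blast
      moreover have "inside y (c (f x))" using inside_path[OF y] 2 e by simp
      ultimately show ?thesis by (rule inside_unique)
    next
      case 3
      then show ?thesis using at_pole[of x] inside_path[OF y] e by auto
    next
      case 4
      then show ?thesis using at_pole[of y] inside_path[OF x] e by auto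
    qed
  qed
  moreover have "f j \<le> k \<and> f j \<notin> IS \<and> c (f j) \<in> path_nodes d j" if "j \<in> {..<l} - {i}" for j
  proof (cases "j \<in> ?U")
    case True
    then show ?thesis using pole[OF True] by auto
  next
    case False
    then show ?thesis using interior[of j] that inside_in_path_nodes by auto
  qed
  ultimately show ?thesis unfolding is_target_def using i ab by blast
qed

lemma card_at_pole_no_excess:
  assumes "wf_conf l d k c" "excess c = 0"
  shows "card (at_pole c) + l = k + card {j. j < l \<and> n_occ c j = 0}"
proof -
  have le1: "n_occ c j \<le> 1" if "j < l" for j using assms(2) that excess_eq_0_iff by blast
  have "(\<Sum>j<l. n_occ c j) = (\<Sum>j\<in>{j. j < l \<and> n_occ c j \<noteq> 0}. 1)"
  proof -
    have "(\<Sum>j<l. n_occ c j) = (\<Sum>j\<in>{j. j < l \<and> n_occ c j \<noteq> 0}. n_occ c j)"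
      by (rule sum.mono_neutral_right) auto
    also have "\<dots> = (\<Sum>j\<in>{j. j < l \<and> n_occ c j \<noteq> 0}. 1)"
    proof (rule sum.cong)
      fix x assume "x \<in> {j. j < l \<and> n_occ c j \<noteq> 0}"
      then show "n_occ c x = 1" using le1[of x] by simp
    qed simp
    finally show ?thesis .
  qed
  also have "\<dots> = card {j. j < l \<and> n_occ c j \<noteq> 0}" by simp
  finally have s: "(\<Sum>j<l. n_occ c j) = card {j. j < l \<and> n_occ c j \<noteq> 0}" .
  have "card {j. j < l \<and> n_occ c j \<noteq> 0} + card {j. j < l \<and> n_occ c j = 0} = l"
  proof -
    have "{j. j < l \<and> n_occ c j \<noteq> 0} \<union> {j. j < l \<and> n_occ c j = 0} = {..<l}" by auto
    moreover have "{j. j < l \<and> n_occ c j \<noteq> 0} \<inter> {j. j < l \<and> n_occ c j = 0} = {}" by auto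
    ultimately show ?thesis using card_Un_disjoint[of "{j. j < l \<and> n_occ c j \<noteq> 0}" "{j. j < l \<and> n_occ c j = 0}"]
      by simp
  qed
  then show ?thesis using card_at_pole_plus_occupants[OF assms(1)] s by simp
qed

lemma card_empty_paths_le:
  assumes "wf_conf l d k c" "excess c = 0"
  shows "card {j. j < l \<and> n_occ c j = 0} \<le> card (at_pole c)"
  using card_at_pole_no_excess[OF assms] kl by simp

lemma is_target_by_counting:
  assumes W: "wf_conf l d k c" and M: "M \<subseteq> Ign" "y \<in> M" and i: "i < l"
    and p0: "c' 0 \<in> path_nodes d i" "c' y \<in> path_nodes d i"
    and same: "\<And>g. g \<in> Ign \<Longrightarrow> g \<notin> M \<Longrightarrow> c' g = c g"
    and disj: "\<And>j. j < l \<Longrightarrow> j \<noteq> i \<Longrightarrow> occupants c j \<inter> M = {}"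
    and cnt: "card ({j. j < l \<and> n_occ c j = 0} - {i}) \<le> card (at_pole c - M)"
  shows "is_target l d k c' (insert 0 M)"
proof -
  let ?U = "{j. j < l \<and> j \<noteq> i \<and> (\<forall>g\<in>Ign - insert 0 M. \<not> inside j (c' g))}"
  let ?P = "{g \<in> Ign - insert 0 M. c' g = NP \<or> c' g = SP}"
  have y0: "y \<noteq> 0" using M by auto
  have U: "?U \<subseteq> {j. j < l \<and> n_occ c j = 0} - {i}"
  proof
    fix j assume j: "j \<in> ?U"
    have "occupants c j = {}"
    proof (rule ccontr)
      assume "occupants c j \<noteq> {}"
      then obtain g where g: "g \<in> occupants c j" by blast
      have "g \<notin> M" using g disj[of j] j by auto
      then have "inside j (c' g)" "g \<in> Ign - insert 0 M" using g same[of g] unfolding occupants_def by auto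
      then show False using j by auto
    qed
    then show "j \<in> {j. j < l \<and> n_occ c j = 0} - {i}" using j unfolding n_occ_def by simp
  qed
  have P: "at_pole c - M \<subseteq> ?P"
  proof
    fix g assume g: "g \<in> at_pole c - M"
    then show "g \<in> ?P" using same[of g] unfolding at_pole_def by auto
  qed
  have c1: "card ?U \<le> card ({j. j < l \<and> n_occ c j = 0} - {i})" by (rule card_mono[OF _ U]) simp
  have c3: "card (at_pole c - M) \<le> card ?P" by (rule card_mono[OF _ P]) simp
  have "card ?U \<le> card ?P" using c1 cnt c3 by linarith
  then show ?thesis
    using is_targetI[of i 0 y "insert 0 M" c'] i y0 M p0 by auto
qed

lemma is_target_meet_occupant:
  assumes W: "wf_conf l d k c" and e0: "excess c = 0" and y: "y \<in> occupants c p" and p: "p < l"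
    and P: "c' 0 \<in> path_nodes d p" "c' y \<in> path_nodes d p" and same: "\<And>g. g \<in> Ign
        \<Longrightarrow> g \<noteq> y \<Longrightarrow> c' g = c g"
  shows "is_target l d k c' (insert 0 {y})"
proof (rule is_target_by_counting[OF W _ _ p P])
  show "{y} \<subseteq> Ign" using y occupants_subset by blast
  show "y \<in> {y}" by simp
  show "\<And>g. g \<in> Ign \<Longrightarrow> g \<notin> {y} \<Longrightarrow> c' g = c g" using same by blast
  show "\<And>j. j < l \<Longrightarrow> j \<noteq> p \<Longrightarrow> occupants c j \<inter> {y} = {}"
    using y occupants_disjoint by blast
  have "y \<notin> at_pole c" using y unfolding occupants_def at_pole_def by auto
  then have "at_pole c - {y} = at_pole c" by simp
  moreover have "card ({j. j < l \<and> n_occ c j = 0} - {p}) \<le> card {j. j < l \<and> n_occ c j = 0}"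
    by (rule card_mono) auto
  ultimately show "card ({j. j < l \<and> n_occ c j = 0} - {p}) \<le> card (at_pole c - {y})"
    using card_empty_paths_le[OF W e0] by simp
qed

lemma is_target_meet_pole_agent:
  assumes W: "wf_conf l d k c" and e0: "excess c = 0" and z: "z \<in> at_pole c" and p: "p < l" and Ap: "occupants c p = {}"
    and P: "c' 0 \<in> path_nodes d p" "c' z \<in> path_nodes d p" and same: "\<And>g. g \<in> Ign
        \<Longrightarrow> g \<noteq> z \<Longrightarrow> c' g = c g"
  shows "is_target l d k c' (insert 0 {z})"
proof (rule is_target_by_counting[OF W _ _ p P])
  show "{z} \<subseteq> Ign" using z unfolding at_pole_def by blast
  show "z \<in> {z}" by simp
  show "\<And>g. g \<in> Ign \<Longrightarrow> g \<notin> {z} \<Longrightarrow> c' g = c g" using same by blast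
  show "\<And>j. j < l \<Longrightarrow> j \<noteq> p \<Longrightarrow> occupants c j \<inter> {z} = {}"
    using z unfolding occupants_def at_pole_def by auto
  have pZ: "p \<in> {j. j < l \<and> n_occ c j = 0}" using p Ap unfolding n_occ_def by simp
  have "card ({j. j < l \<and> n_occ c j = 0} - {p}) = card {j. j < l \<and> n_occ c j = 0} - 1"
    using pZ by (simp add: card_Diff_singleton)
  moreover have "card (at_pole c - {z}) = card (at_pole c) - 1" using z by (simp add: card_Diff_singleton)
  moreover have "card {j. j < l \<and> n_occ c j = 0} \<le> card (at_pole c)" using card_empty_paths_le[OF W e0] .
  ultimately show "card ({j. j < l \<and> n_occ c j = 0} - {p}) \<le> card (at_pole c - {z})" by simp
qed

lemma is_target_source_joins_N:
  assumes W: "wf_conf l d k c" and e0: "excess c = 0" and y: "y \<in> at_N c"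
    and few: "card (at_N c) \<le> k - l + 1"
  shows "is_target l d k (c(0 := NP)) (insert 0 (at_N c))"
proof -
  let ?Z = "{j. j < l \<and> n_occ c j = 0}"
  obtain i where i: "i < l" "?Z \<noteq> {} \<Longrightarrow> i \<in> ?Z"
  proof (cases "?Z = {}")
    case True
    then show ?thesis using that[of 0] l1 by simp
  next
    case False
    then obtain i where "i \<in> ?Z" by blast
    then show ?thesis using that[of i] by simp
  qed
  have cnt: "card (?Z - {i}) \<le> card (at_pole c - at_N c)"
  proof -
    have "at_pole c - at_N c = at_S c" unfolding at_pole_def at_N_def at_S_def by auto
    moreover have "card (at_pole c) = card (at_N c) + card (at_S c)"
      using at_pole_eq_Un at_N_at_S_disjoint by (simp add: card_Un_disjoint)
    moreover have "card (at_pole c) + l = k + card ?Z" using card_at_pole_no_excess[OF W e0] .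
    moreover have "card (?Z - {i}) \<le> card ?Z - 1"
    proof (cases "?Z = {}")
      case True
      then show ?thesis by (simp only: Diff_empty card.empty) simp
    next
      case False
      then show ?thesis using i(2) by (simp add: card_Diff_singleton)
    qed
    ultimately show ?thesis using few kl by simp
  qed
  show ?thesis
  proof (rule is_target_by_counting[OF W _ y i(1)])
    show "at_N c \<subseteq> Ign" unfolding at_N_def by auto
    show "(c(0 := NP)) 0 \<in> path_nodes d i" "(c(0 := NP)) y \<in> path_nodes d i"
      using y unfolding at_N_def by auto
    show "\<And>g. g \<in> Ign \<Longrightarrow> g \<notin> at_N c \<Longrightarrow> (c(0 := NP)) g = c g" by auto
    show "\<And>j. j < l \<Longrightarrow> j \<noteq> i \<Longrightarrow> occupants c j \<inter> at_N c = {}"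
      unfolding occupants_def at_N_def by auto
  qed (rule cnt)
qed

lemma is_target_other_paths_occupied:
  assumes p: "p < l" and a: "a \<in> Ign" and on_p: "c 0 \<in> path_nodes d p" "c a \<in> path_nodes d p"
    and occupied: "\<And>j. j < l \<Longrightarrow> j \<noteq> p \<Longrightarrow> \<exists>g\<in>Ign - {a}. inside j (c g)"
  shows "is_target l d k c (insert 0 {a})"
proof (rule is_targetI[OF p _ _ _ on_p])
  have "\<exists>g\<in>Ign - insert 0 {a}. inside j (c g)" if "j < l" "j \<noteq> p" for j
    using occupied[OF that] by auto
  then have "{j. j < l \<and> j \<noteq> p \<and> (\<forall>g\<in>Ign - insert 0 {a}. \<not> inside j (c g))} = {}"
    by blast
  then show "card {j. j < l \<and> j \<noteq> p \<and> (\<forall>g\<in>Ign - insert 0 {a}. \<not> inside j (c g))}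
      \<le> card {g \<in> Ign - insert 0 {a}. c g = NP \<or> c g = SP}" by (simp only: card.empty le0)
qed (use a in auto)

lemma in_measures_potential: "(x, y) \<in> measures potential \<longleftrightarrow>
   phase x < phase y \<or> phase x = phase y \<and> (rank1 x < rank1 y \<or> rank1 x = rank1 y
     \<and> (rank2 x < rank2 y \<or> rank2 x = rank2 y \<and>
   (rank3 x < rank3 y \<or> rank3 x = rank3 y \<and> (rank4 x < rank4 y \<or> rank4 x = rank4 y
     \<and> (rank5 x < rank5 y \<or> rank5 x = rank5 y \<and> rank6 x < rank6 y)))))"
  unfolding potential_def by simp

lemma good_moveI_descent: "legal_move k F c c' \<Longrightarrow> meet k c' = {}
    \<Longrightarrow> (c', c) \<in> measures potential \<Longrightarrow> good_move l d k potential F c c'"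
  unfolding good_move_def by blast

lemma good_moveI_meet: "legal_move k F c c' \<Longrightarrow> meet k c' \<noteq> {}
    \<Longrightarrow> is_target l d k c' (insert 0 (meet k c')) \<Longrightarrow> good_move l d k potential F c c'"
  unfolding good_move_def by blast

lemma potential_descent_excess:
  assumes "0 < excess c"
    "excess c' < excess c \<or> excess c' = excess c
        \<and> (total_pole_gap c' < total_pole_gap c \<or> total_pole_gap c' = total_pole_gap c
          \<and> (stall_rank c' < stall_rank c \<or> stall_rank c' = stall_rank c \<and> card (at_pole c') < card (at_pole c)))"
  shows "(c', c) \<in> measures potential"
proof (cases "excess c' = 0")
  case True
  then have "phase c' < phase c" using assms(1) unfolding phase_def by auto
  then show ?thesis unfolding in_measures_potential by blast
next
  case False
  then have "phase c' = 3" "phase c = 3" using assms(1) unfolding phase_def by auto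
  then show ?thesis using assms(2) unfolding in_measures_potential rank1_def rank2_def rank3_def rank4_def by auto
qed

lemma potential_descent_phase1:
  assumes "phase c = 1" "excess c' = 0" "c' 0 \<noteq> NP" "c' 0 \<noteq> SP"
    "vidx (c' 0) < vidx (c 0) \<or> vidx (c' 0) = vidx (c 0)
        \<and> (above_weight c' < above_weight c \<or> above_weight c' = above_weight c \<and>
      (card (at_N c') < card (at_N c) \<or> card (at_N c') = card (at_N c)
        \<and> (total_off_dist c' < total_off_dist c \<or> total_off_dist c' = total_off_dist c \<and>
      (none_below c' < none_below c \<or> none_below c' = none_below c \<and> below_gap c' < below_gap c))))"
  shows "(c', c) \<in> measures potential"
proof -
  have "phase c' = 1" using assms(2,3,4) unfolding phase_def by simp
  then show ?thesis using assms(1,5)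
    unfolding in_measures_potential rank1_def rank2_def rank3_def rank4_def rank5_def rank6_def by auto
qed

section \<open>Moves when every path has at most one occupant\<close>

definition enter :: "conf \<Rightarrow> tvert \<Rightarrow> tvert \<Rightarrow> conf" where
  "enter c w w' = (\<lambda>g. if g \<in> Ign \<and> c g = w then w' else c g)(0 := w)"

lemma enter_move:
  assumes r: "inside r w" "w' \<in> path_nodes d r" "w' \<noteq> w" and E: "{c 0, w} \<in> F" "{w, w'} \<in> F"
  shows "legal_move k F c (enter c w w')" "meet k (enter c w w') = {}" "enter c w w' 0 = w"
    and "\<And>x. x \<noteq> r \<Longrightarrow> occupants (enter c w w') x = occupants c x"
    and "\<And>a x. a \<in> occupants c x \<Longrightarrow> x \<noteq> r \<Longrightarrow> enter c w w' a = c a"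
    and "occupants (enter c w w') r \<subseteq> occupants c r"
proof -
  show "legal_move k F c (enter c w w')" using E unfolding enter_def legal_move_def by auto
  show "meet k (enter c w w') = {}" using r(3) unfolding meet_def enter_def by auto
  show "enter c w w' 0 = w" unfolding enter_def by simp
  show "occupants (enter c w w') x = occupants c x" if "x \<noteq> r" for x
  proof -
    have "\<not> inside x w" "\<not> inside x w'"
      using that r(1,2) inside_unique path_nodes_not_inside_other by blast+
    then show ?thesis unfolding occupants_def enter_def by auto
  qed
  show "enter c w w' a = c a" if "a \<in> occupants c x" "x \<noteq> r" for a x
    using that r(1) inside_unique occupant_nonzero unfolding occupants_def enter_def by auto
  show "occupants (enter c w w') r \<subseteq> occupants c r"
    using r(1) unfolding occupants_def enter_def by auto
qed

lemma good_move_occupant_climbs_to_N: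
  assumes W: "wf_conf l d k c" and e0: "excess c = 0" and s: "c 0 = NP"
    and r: "r < l" and a: "a \<in> occupants c r" and E: "pedge d r (vidx (c a) - 1) \<in> F"
  shows "\<exists>c'. good_move l d k potential F c c'"
proof -
  define m where "m = vidx (c a)"
  have m: "1 \<le> m" "m \<le> d r" "c a = IV r m" using occupant_position[OF a] unfolding m_def by auto
  have aIG: "a \<in> Ign" using a occupants_subset by blast
  define c' where "c' = c(a := pnode d r (m - 1))"
  have legal: "legal_move k F c c'"
    using pedge_rev[OF E] m unfolding c'_def m_def by (intro legal_move_upd) simp
  show ?thesis
  proof (cases "m = 1")
    case True
    have "meet k c' = {a}" using meet_upd[OF W aIG] True s unfolding c'_def by simp
    moreover have "is_target l d k c' (insert 0 {a})"
      by (rule is_target_meet_occupant[OF W e0 a r]) (use True s aIG in \<open>auto simp: c'_def\<close>)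
    ultimately show ?thesis using good_moveI_meet[OF legal] by auto
  next
    case False
    have "1 \<le> m - 1" "m - 1 \<le> d r" using False m by linarith+
    then have "inside r (pnode d r (m - 1))" by simp
    then have "occupants c' j = occupants c j" for j
      unfolding c'_def using occupants_upd_same_path[OF a] by simp
    then have ea': "excess c' = 0" using e0 unfolding excess_def n_occ_def by simp
    have meet: "meet k c' = {}" using meet_upd[OF W aIG] False m s unfolding c'_def by (auto simp: pnode_def)
    have "total_depth c' + depth total_length (c a) = total_depth c + depth total_length (c' a)"
      unfolding total_depth_def by (rule sum_update_agent[OF aIG]) (simp add: c'_def)
    moreover have "depth total_length (c' a) < depth total_length (c a)"
      using m False by (simp add: c'_def)
    ultimately have "total_depth c' < total_depth c" by simp
    then have "(c', c) \<in> measures potential"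
      using ea' e0 s aIG unfolding in_measures_potential phase_def rank1_def by (simp add: c'_def)
    then show ?thesis using good_moveI_descent[OF legal meet] by blast
  qed
qed

lemma at_pole_nonempty_if_empty_path:
  assumes W: "wf_conf l d k c" and e0: "excess c = 0" and r: "r < l" and empty: "occupants c r = {}"
  shows "at_pole c \<noteq> {}"
proof -
  have "r \<in> {j. j < l \<and> n_occ c j = 0}" using empty r unfolding n_occ_def by simp
  then have "card {j. j < l \<and> n_occ c j = 0} \<noteq> 0" by auto
  then have "card (at_pole c) \<noteq> 0" using card_empty_paths_le[OF W e0] by linarith
  then show ?thesis by auto
qed

lemma good_move_S_agent_enters_empty_path:
  assumes W: "wf_conf l d k c" and e0: "excess c = 0" and s: "c 0 = NP"
    and r: "r < l" and empty: "occupants c r = {}" and E: "pedge d r (d r) \<in> F"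
  shows "\<exists>c'. good_move l d k potential F c c'"
proof -
  have "at_N c = {}" using W s unfolding at_N_def wf_conf_def by auto
  then have "at_S c \<noteq> {}" using at_pole_nonempty_if_empty_path[OF W e0 r empty] at_pole_eq_Un by auto
  then obtain a where "a \<in> at_S c" by blast
  then have aIG: "a \<in> Ign" and ca: "c a = SP" unfolding at_S_def by auto
  have dr: "1 \<le> d r" using dpos r by blast
  define c' where "c' = c(a := IV r (d r))"
  have legal: "legal_move k F c c'"
    using pedge_rev[OF E] ca dr unfolding c'_def by (intro legal_move_upd) simp
  have meet: "meet k c' = {}" using meet_upd[OF W aIG] s unfolding c'_def by simp
  have "n_occ c' j \<le> 1" if "j < l" for j
  proof (cases "j = r")
    case True
    have "occupants c' r = {a}" using empty aIG dr unfolding c'_def occupants_upd by auto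
    then show ?thesis using True unfolding n_occ_def by simp
  next
    case False
    have "occupants c' j = occupants c j"
      unfolding c'_def occupants_upd using False ca by (auto simp: occupants_def)
    then show ?thesis using e0 that excess_eq_0_iff unfolding n_occ_def by metis
  qed
  then have ea': "excess c' = 0" using excess_eq_0_iff by blast
  have "total_depth c' + depth total_length (c a) = total_depth c + depth total_length (c' a)"
    unfolding total_depth_def by (rule sum_update_agent[OF aIG]) (simp add: c'_def)
  moreover have "depth total_length (c' a) < depth total_length (c a)"
    using ca length_le_total_length[OF r] unfolding c'_def by simp
  ultimately have "total_depth c' < total_depth c" by simp
  then have "(c', c) \<in> measures potential"
    using ea' e0 s aIG unfolding in_measures_potential phase_def rank1_def by (simp add: c'_def)
  then show ?thesis using good_moveI_descent[OF legal meet] by blast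
qed

lemma good_move_source_at_N:
  assumes W: "wf_conf l d k c" and F: "valid_round l d F" and e0: "excess c = 0" and s: "c 0 = NP"
  shows "\<exists>c'. good_move l d k potential F c c'"
proof -
  obtain r where r: "r < l" and intact: "\<And>m. m \<le> d r \<Longrightarrow> pedge d r m \<in> F"
    using intact_path_exists[OF F dpos] by blast
  show ?thesis
  proof (cases "occupants c r = {}")
    case False
    then obtain a where a: "a \<in> occupants c r" by blast
    have "vidx (c a) - 1 \<le> d r" using occupant_position[OF a] by linarith
    then have "pedge d r (vidx (c a) - 1) \<in> F" by (rule intact)
    then show ?thesis using good_move_occupant_climbs_to_N[OF W e0 s r a] by blast
  next
    case True
    then show ?thesis using good_move_S_agent_enters_empty_path[OF W e0 s r] intact by blast
  qed
qed

lemma good_move_source_at_S: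
  assumes W: "wf_conf l d k c" and F: "valid_round l d F" and e0: "excess c = 0" and s: "c 0 = SP"
  shows "\<exists>c'. good_move l d k potential F c c'"
proof -
  obtain r where r: "r < l" "\<And>m. m \<le> d r \<Longrightarrow> pedge d r m \<in> F" using intact_path_exists[OF F dpos] by blast
  have dr: "1 \<le> d r" using dpos r by blast
  have "{c 0, IV r (d r)} \<in> F" using pedge_rev[OF r(2)[of "d r"]] s dr by simp
  moreover have "{IV r (d r), pnode d r (d r - 1)} \<in> F" using pedge_rev[OF r(2)[of "d r - 1"]] dr by simp
  moreover have "pnode d r (d r - 1) \<in> path_nodes d r" by (rule pnode_in_path_nodes) simp
  moreover have "pnode d r (d r - 1) \<noteq> IV r (d r)" using dr by (auto simp: pnode_def)
  ultimately have enter: "legal_move k F c (enter c (IV r (d r)) (pnode d r (d r - 1)))"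
    "meet k (enter c (IV r (d r)) (pnode d r (d r - 1))) = {}"
    "enter c (IV r (d r)) (pnode d r (d r - 1)) 0 = IV r (d r)"
    "\<And>x. x \<noteq> r \<Longrightarrow> occupants (enter c (IV r (d r)) (pnode d r (d r - 1))) x = occupants c x"
    "occupants (enter c (IV r (d r)) (pnode d r (d r - 1))) r \<subseteq> occupants c r"
    using enter_move[of r "IV r (d r)" "pnode d r (d r - 1)" c F] dr by auto
  have "n_occ (enter c (IV r (d r)) (pnode d r (d r - 1))) j \<le> n_occ c j" for j
    using enter(4,5) unfolding n_occ_def by (cases "j = r") (auto intro: card_mono)
  then have "excess (enter c (IV r (d r)) (pnode d r (d r - 1))) = 0"
    using e0 excess_eq_0_iff le_trans by blast
  then have "phase (enter c (IV r (d r)) (pnode d r (d r - 1))) = 1" using enter(3) unfolding phase_def by simp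
  moreover have "phase c = 2" using e0 s unfolding phase_def by simp
  ultimately have "(enter c (IV r (d r)) (pnode d r (d r - 1)), c) \<in> measures potential"
    unfolding in_measures_potential by simp
  then show ?thesis using good_moveI_descent[OF enter(1,2)] by blast
qed

lemma good_move_N_agent_enters_path:
  assumes W: "wf_conf l d k c" and e0: "excess c = 0" and s: "c 0 = IV p q"
    and r: "r < l" "r \<noteq> p" and empty: "occupants c r = {}" and E: "pedge d r 0 \<in> F"
    and z: "z \<in> at_N c"
  shows "\<exists>c'. good_move l d k potential F c c'"
proof -
  have zIG: "z \<in> Ign" and cz: "c z = NP" using z unfolding at_N_def by auto
  have dr: "1 \<le> d r" using dpos r by blast
  define c' where "c' = c(z := IV r 1)"
  have legal: "legal_move k F c c'"
    using pedge_fwd[OF E] cz dr unfolding c'_def by (intro legal_move_upd) simp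
  have c'0: "c' 0 = c 0" using zIG unfolding c'_def by auto
  have meet: "meet k c' = {}" using meet_upd[OF W zIG] s r(2) unfolding c'_def by simp
  have occ: "occupants c' j = (if j = r then {z} else occupants c j)" for j
    using empty zIG dr cz unfolding c'_def occupants_upd by (auto simp: occupants_def)
  have "n_occ c' j \<le> 1" if "j < l" for j
  proof -
    have "n_occ c j \<le> 1" using e0 that excess_eq_0_iff by blast
    then show ?thesis using occ[of j] unfolding n_occ_def by simp
  qed
  then have e': "excess c' = 0" using excess_eq_0_iff by blast
  have "c' a = c a" if "a \<in> occupants c p" for a
    using that cz unfolding c'_def occupants_def by auto
  then have weights: "above_weight c' = above_weight c" "none_below c' = none_below c"
    "below_gap c' = below_gap c"
    using source_path_weights_cong[of c' c] c'0 occ[of p] r(2) s by auto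
  have "at_N c' = at_N c - {z}" using cz unfolding c'_def at_N_upd by auto
  then have "card (at_N c') < card (at_N c)" using card_Diff1_less[OF finite_at_N z] by simp
  then have "(c', c) \<in> measures potential"
    using potential_descent_phase1[OF phase_source_inside[OF e0 s] e'] c'0 s weights by simp
  then show ?thesis using good_moveI_descent[OF legal meet] by blast
qed

lemma good_move_occupant_descends_path:
  assumes W: "wf_conf l d k c" and e0: "excess c = 0" and s: "c 0 = IV p q"
    and r: "r < l" "r \<noteq> p" and g: "g \<in> occupants c r" and E: "pedge d r (vidx (c g)) \<in> F"
  shows "\<exists>c'. good_move l d k potential F c c'"
proof -
  define m where "m = vidx (c g)"
  have m: "1 \<le> m" "m \<le> d r" "c g = IV r m" using occupant_position[OF g] unfolding m_def by auto
  have gIG: "g \<in> Ign" using g occupants_subset by blast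
  define c' where "c' = c(g := pnode d r (Suc m))"
  have legal: "legal_move k F c c'"
    using pedge_fwd[OF E] m unfolding c'_def m_def by (intro legal_move_upd) simp
  have c'0: "c' 0 = c 0" using gIG unfolding c'_def by auto
  have new: "pnode d r (Suc m) = SP \<or> pnode d r (Suc m) = IV r (Suc m)" by (auto simp: pnode_def)
  have meet: "meet k c' = {}" using meet_upd[OF W gIG] s r(2) new unfolding c'_def by auto
  have sub: "occupants c' j \<subseteq> occupants c j" for j
    using g new unfolding c'_def occupants_def by auto
  have "n_occ c' j \<le> 1" if "j < l" for j
  proof -
    have "n_occ c' j \<le> n_occ c j" unfolding n_occ_def by (rule card_mono[OF finite_occupants sub])
    moreover have "n_occ c j \<le> 1" using e0 that excess_eq_0_iff by blast
    ultimately show ?thesis by simp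
  qed
  then have e': "excess c' = 0" using excess_eq_0_iff by blast
  have gp: "g \<notin> occupants c p" using g r(2) occupants_disjoint by blast
  then have "occupants c' p = occupants c p" using new r(2) unfolding c'_def occupants_upd by auto
  moreover have "c' a = c a" if "a \<in> occupants c p" for a
    using that gp unfolding c'_def by auto
  ultimately have weights: "above_weight c' = above_weight c" "none_below c' = none_below c"
    "below_gap c' = below_gap c"
    using source_path_weights_cong[of c' c] c'0 s by auto
  have "at_N c' = at_N c" using m new unfolding c'_def at_N_upd by (auto simp: at_N_def)
  moreover have "total_off_dist c' + off_dist p (c g) = total_off_dist c + off_dist p (pnode d r (Suc m))"
    using total_off_dist_upd[OF gIG c'_def c'0] s by simp
  moreover have "off_dist p (pnode d r (Suc m)) < off_dist p (c g)"
    using new m r(2) by (auto simp: pnode_def split: if_splits)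
  ultimately have "(c', c) \<in> measures potential"
    using potential_descent_phase1[OF phase_source_inside[OF e0 s] e'] c'0 s weights by simp
  then show ?thesis using good_moveI_descent[OF legal meet] by blast
qed

lemma good_move_via_intact_path:
  assumes W: "wf_conf l d k c" and e0: "excess c = 0" and s: "c 0 = IV p q" "p < l" "1 \<le> q" "q \<le> d p"
    and r: "r < l" "r \<noteq> p" "\<And>m. m \<le> d r \<Longrightarrow> pedge d r m \<in> F"
    and N: "occupants c r = {} \<Longrightarrow> at_N c \<noteq> {}"
  shows "\<exists>c'. good_move l d k potential F c c'"
proof (cases "occupants c r = {}")
  case True
  then show ?thesis using good_move_N_agent_enters_path[OF W e0 s(1) r(1,2) True] r(3) N by blast
next
  case False
  then obtain g where g: "g \<in> occupants c r" by blast
  have "pedge d r (vidx (c g)) \<in> F" using r(3) occupant_position[OF g] by blast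
  then show ?thesis using good_move_occupant_descends_path[OF W e0 s(1) r(1,2) g] by blast
qed

lemma good_move_lower_occupant:
  assumes W: "wf_conf l d k c" and e0: "excess c = 0" and s: "c 0 = IV p q" "p < l" "1 \<le> q" "q \<le> d p"
    and Ay: "occupants c p = {y}" and iy: "q < vidx (c y)" and E: "pedge d p (vidx (c y) - 1) \<in> F"
  shows "\<exists>c'. good_move l d k potential F c c'"
proof -
  have yA: "y \<in> occupants c p" using Ay by simp
  define m where "m = vidx (c y)"
  have m: "1 \<le> m" "m \<le> d p" "c y = IV p m" using occupant_position[OF yA] unfolding m_def by auto
  have yIG: "y \<in> Ign" using yA occupants_subset by blast
  have qm: "q < m" using iy unfolding m_def .
  define c' where "c' = c(y := IV p (m - 1))"
  have legal: "legal_move k F c c'"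
  proof (rule legal_moveI)
    fix g assume "g \<le> k" "c' g \<noteq> c g"
    then have "g = y" unfolding c'_def by (cases "g = y") auto
    have "{pnode d p (Suc (m - 1)), pnode d p (m - 1)} \<in> F" using E by (intro pedge_rev) (simp add: m_def)
    moreover have "Suc (m - 1) = m" using m by simp
    moreover have "1 \<le> m - 1" "m - 1 \<le> d p" using qm m s by linarith+
    then have "pnode d p (m - 1) = IV p (m - 1)" by simp
    ultimately show "{c g, c' g} \<in> F" using \<open>g = y\<close> m unfolding c'_def by simp
  qed
  have c'0: "c' 0 = c 0" using yIG unfolding c'_def by auto
  show ?thesis
  proof (cases "m - 1 = q")
    case True
    have meet: "meet k c' = {y}" using meet_upd[OF W yIG] True s unfolding c'_def by simp
    have "is_target l d k c' (insert 0 {y})"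
      by (rule is_target_meet_occupant[OF W e0 yA s(2)]) (use c'0 s True m in \<open>auto simp: c'_def IV_in_path_nodes_iff\<close>)
    then have "good_move l d k potential F c c'" using good_moveI_meet[OF legal] meet by simp
    then show ?thesis by blast
  next
    case False
    have meet: "meet k c' = {}" using meet_upd[OF W yIG] False s unfolding c'_def by simp
    have "1 \<le> m - 1" "m - 1 \<le> d p" using qm m s by linarith+
    then have in2: "inside p (IV p (m - 1))" by simp
    have occ_eq: "occupants c' j = occupants c j" for j unfolding c'_def using occupants_upd_same_path[OF yA in2] by simp
    have e': "excess c' = 0" using e0 occ_eq unfolding excess_def n_occ_def by simp
    have "above_weight c' = above_weight c" "none_below c' = none_below c"
      unfolding above_weight_def none_below_def using c'0 occ_eq Ay s qm m False by (simp_all add: c'_def)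
    moreover have "below_gap c' < below_gap c"
    proof -
      have "below_gap c' = (if q < m - 1 then m - 1 - q else 0)"
        unfolding below_gap_def using c'0 occ_eq[of p] Ay s by (simp add: c'_def)
      moreover have "below_gap c = m - q" unfolding below_gap_def using Ay s m qm by simp
      ultimately show ?thesis using qm by (simp split: if_splits)
    qed
    moreover have "at_N c' = at_N c" using m unfolding c'_def at_N_upd by (auto simp: at_N_def)
    moreover have "total_off_dist c' = total_off_dist c"
      using total_off_dist_upd[OF yIG c'_def c'0] s m by simp
    ultimately have "(c', c) \<in> measures potential"
      using potential_descent_phase1[OF phase_source_inside[OF e0 s(1)] e'] c'0 s by simp
    then show ?thesis using good_moveI_descent[OF legal meet] by blast
  qed
qed

lemma good_move_source_climbs:
  assumes W: "wf_conf l d k c" and e0: "excess c = 0"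
    and s: "c 0 = IV p q" "p < l" "2 \<le> q" "q \<le> d p" and E: "pedge d p (q - 1) \<in> F"
  shows "\<exists>c'. good_move l d k potential F c c'"
proof -
  have q1: "1 \<le> q - 1" "q - 1 \<le> d p" using s by linarith+
  define c' where "c' = c(0 := IV p (q - 1))"
  have legal: "legal_move k F c c'"
    using pedge_rev[OF E] q1 s unfolding c'_def by (intro legal_move_upd) simp
  have meet: "meet k c' = {g \<in> Ign. c g = IV p (q - 1)}" unfolding c'_def meet_upd_source ..
  show ?thesis
  proof (cases "meet k c' = {}")
    case False
    then obtain y where y: "y \<in> Ign" "c y = IV p (q - 1)" using meet by blast
    then have yA: "y \<in> occupants c p" using q1 unfolding occupants_def by simp
    then have "occupants c p = {y}" using occupants_at_most_one[OF e0 s(2)] by auto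
    then have "meet k c' = {y}" using meet y q1 unfolding occupants_def by auto
    moreover have "is_target l d k c' (insert 0 {y})"
      by (rule is_target_meet_occupant[OF W e0 yA s(2)])
        (use q1 y in \<open>auto simp: c'_def IV_in_path_nodes_iff\<close>)
    ultimately show ?thesis using good_moveI_meet[OF legal] by auto
  next
    case True
    have e': "excess c' = 0" using e0 unfolding c'_def excess_def n_occ_def occupants_upd_source .
    have "(c', c) \<in> measures potential"
      using potential_descent_phase1[OF phase_source_inside[OF e0 s(1)] e'] s q1 by (simp add: c'_def)
    then show ?thesis using good_moveI_descent[OF legal True] by blast
  qed
qed

lemma good_move_source_steps_to_N:
  assumes W: "wf_conf l d k c" and e0: "excess c = 0"
    and s: "c 0 = IV p 1" "p < l" and E: "pedge d p 0 \<in> F" and few: "card (at_N c) \<le> k - l + 1"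
  shows "\<exists>c'. good_move l d k potential F c c'"
proof -
  have dp: "1 \<le> d p" using dpos s by blast
  define c' where "c' = c(0 := NP)"
  have legal: "legal_move k F c c'"
    using pedge_rev[OF E] s dp unfolding c'_def by (intro legal_move_upd) simp
  have meet: "meet k c' = at_N c" unfolding c'_def meet_upd_source at_N_def ..
  show ?thesis
  proof (cases "at_N c = {}")
    case True
    have "excess c' = 0" using e0 unfolding c'_def excess_def n_occ_def occupants_upd_source .
    then have "phase c' = 0" unfolding phase_def c'_def by simp
    then have "(c', c) \<in> measures potential"
      using phase_source_inside[OF e0 s(1)] unfolding in_measures_potential by simp
    then show ?thesis using good_moveI_descent[OF legal] meet True by blast
  next
    case False
    then obtain y where "y \<in> at_N c" by blast
    then have "is_target l d k c' (insert 0 (at_N c))"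
      unfolding c'_def by (rule is_target_source_joins_N[OF W e0 _ few])
    then show ?thesis using good_moveI_meet[OF legal] meet False by auto
  qed
qed

lemma good_move_N_agent_meets_source:
  assumes W: "wf_conf l d k c" and e0: "excess c = 0"
    and s: "c 0 = IV p 1" "p < l" and E: "pedge d p 0 \<in> F"
    and empty: "occupants c p = {}" and z: "z \<in> at_N c"
  shows "\<exists>c'. good_move l d k potential F c c'"
proof -
  have zIG: "z \<in> Ign" and cz: "c z = NP" using z unfolding at_N_def by auto
  have dp: "1 \<le> d p" using dpos s by blast
  define c' where "c' = c(z := IV p 1)"
  have legal: "legal_move k F c c'"
    using pedge_fwd[OF E] cz dp unfolding c'_def by (intro legal_move_upd) simp
  have meet: "meet k c' = {z}" using meet_upd[OF W zIG] s unfolding c'_def by simp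
  have "is_target l d k c' (insert 0 {z})"
  proof (rule is_target_meet_pole_agent[OF W e0 _ s(2) empty])
    show "z \<in> at_pole c" using z unfolding at_N_def at_pole_def by auto
    show "c' 0 \<in> path_nodes d p" "c' z \<in> path_nodes d p"
      using zIG s dp unfolding c'_def by (auto simp: IV_in_path_nodes_iff)
    show "\<And>g. g \<in> Ign \<Longrightarrow> g \<noteq> z \<Longrightarrow> c' g = c g" unfolding c'_def by auto
  qed
  then show ?thesis using good_moveI_meet[OF legal] meet by auto
qed

lemma good_move_source_next_to_N:
  assumes W: "wf_conf l d k c" and F: "valid_round l d F" and e0: "excess c = 0"
    and s: "c 0 = IV p 1" "p < l" and E: "pedge d p 0 \<in> F"
  shows "\<exists>c'. good_move l d k potential F c c'"
proof (cases "card (at_N c) \<le> k - l + 1")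
  case True
  then show ?thesis using good_move_source_steps_to_N[OF W e0 s E] by blast
next
  case many: False
  then obtain z where z: "z \<in> at_N c" by fastforce
  have dp: "1 \<le> d p" using dpos s by blast
  have s': "c 0 = IV p 1" "p < l" "1 \<le> (1::nat)" "1 \<le> d p" using s dp by auto
  show ?thesis
  proof (cases "occupants c p = {}")
    case True
    then show ?thesis using good_move_N_agent_meets_source[OF W e0 s E True z] by blast
  next
    case False
    then obtain y where Ay: "occupants c p = {y}" using occupants_at_most_one[OF e0 s(2)] by blast
    then have yA: "y \<in> occupants c p" by simp
    have iy: "1 \<le> vidx (c y)" "vidx (c y) \<le> d p" "c y = IV p (vidx (c y))"
      using occupant_position[OF yA] by auto
    have "c y \<noteq> c 0" using wf_conf_not_on_source[OF W] yA occupants_subset by blast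
    then have qy: "1 < vidx (c y)" using iy s by (cases "vidx (c y) = 1") auto
    show ?thesis
    proof (cases "pedge d p (vidx (c y) - 1) \<in> F")
      case True
      then show ?thesis by (rule good_move_lower_occupant[OF W e0 s' Ay qy])
    next
      case False
      obtain r where r: "r < l" "\<And>m. m \<le> d r \<Longrightarrow> pedge d r m \<in> F"
        using intact_path_exists[OF F dpos] by blast
      have "r \<noteq> p" using False r(2)[of "vidx (c y) - 1"] iy by auto
      then show ?thesis using good_move_via_intact_path[OF W e0 s' r(1) _ r(2)] z by blast
    qed
  qed
qed

lemma good_move_source_inside_open:
  assumes W: "wf_conf l d k c" and F: "valid_round l d F" and e0: "excess c = 0"
    and s: "c 0 = IV p q" "p < l" "1 \<le> q" "q \<le> d p" and E: "pedge d p (q - 1) \<in> F"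
  shows "\<exists>c'. good_move l d k potential F c c'"
proof (cases "2 \<le> q")
  case True
  then show ?thesis using good_move_source_climbs[OF W e0 s(1,2) _ s(4) E] by blast
next
  case False
  then have "q = 1" using s by simp
  then show ?thesis using good_move_source_next_to_N[OF W F e0 _ s(2)] s(1) E by simp
qed

lemma good_move_upper_occupant_climbs:
  assumes W: "wf_conf l d k c" and e0: "excess c = 0" and s: "c 0 = IV p q" "p < l"
    and Ay: "occupants c p = {y}" and mq: "vidx (c y) < q" and E: "pedge d p (vidx (c y) - 1) \<in> F"
  shows "\<exists>c'. good_move l d k potential F c c'"
proof -
  have yA: "y \<in> occupants c p" using Ay by simp
  have yIG: "y \<in> Ign" using yA occupants_subset by blast
  define m where "m = vidx (c y)"
  have m: "1 \<le> m" "m \<le> d p" "c y = IV p m" using occupant_position[OF yA] unfolding m_def by auto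
  define c' where "c' = c(y := pnode d p (m - 1))"
  have legal: "legal_move k F c c'"
    using pedge_rev[OF E] m unfolding c'_def m_def by (intro legal_move_upd) simp
  have c'0: "c' 0 = c 0" using yIG unfolding c'_def by auto
  have mq': "m < q" using mq unfolding m_def .
  have "pnode d p (m - 1) \<noteq> c 0" using s mq' m by (auto simp: pnode_def)
  then have meet: "meet k c' = {}" using meet_upd[OF W yIG] unfolding c'_def by simp
  have occ: "occupants c' j \<subseteq> occupants c j" for j
    using m unfolding c'_def occupants_upd by (auto simp: occupants_def pnode_def)
  have "n_occ c' j \<le> 1" if "j < l" for j
  proof -
    have "n_occ c' j \<le> n_occ c j" unfolding n_occ_def by (rule card_mono[OF finite_occupants occ])
    moreover have "n_occ c j \<le> 1" using e0 that excess_eq_0_iff by blast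
    ultimately show ?thesis by simp
  qed
  then have e': "excess c' = 0" using excess_eq_0_iff by blast
  have "above_weight c = m" unfolding above_weight_def using Ay s m mq' by simp
  moreover have "above_weight c' < m"
  proof (cases "m = 1")
    case True
    then have "occupants c' p = {}" using Ay yIG unfolding c'_def occupants_upd by auto
    then show ?thesis unfolding above_weight_def using c'0 s m by simp
  next
    case False
    then have m1: "1 \<le> m - 1" "m - 1 \<le> d p" using m by linarith+
    then have "occupants c' p = {y}" using Ay yIG unfolding c'_def occupants_upd by auto
    then have "above_weight c' = (if m - 1 < q then m - 1 else 0)"
      unfolding above_weight_def using c'0 s m1 by (simp add: c'_def)
    then show ?thesis using m1 mq' by auto
  qed
  ultimately have "(c', c) \<in> measures potential"
    using potential_descent_phase1[OF phase_source_inside[OF e0 s(1)] e'] c'0 s by simp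
  then show ?thesis using good_moveI_descent[OF legal meet] by blast
qed

lemma good_move_S_agent_enters_source_path:
  assumes W: "wf_conf l d k c" and e0: "excess c = 0" and s: "c 0 = IV p q" "p < l" "1 \<le> q" "q \<le> d p"
    and empty: "occupants c p = {}" and x: "x \<in> at_S c" and E: "pedge d p (d p) \<in> F"
  shows "\<exists>c'. good_move l d k potential F c c'"
proof -
  have xIG: "x \<in> Ign" and cx: "c x = SP" using x unfolding at_S_def by auto
  have dp: "1 \<le> d p" using s by simp
  define c' where "c' = c(x := IV p (d p))"
  have legal: "legal_move k F c c'"
    using pedge_rev[OF E] cx dp unfolding c'_def by (intro legal_move_upd) simp
  have c'0: "c' 0 = c 0" using xIG unfolding c'_def by auto
  show ?thesis
  proof (cases "q = d p")
    case True
    have meet: "meet k c' = {x}" using meet_upd[OF W xIG] s True unfolding c'_def by simp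
    have "is_target l d k c' (insert 0 {x})"
    proof (rule is_target_meet_pole_agent[OF W e0 _ s(2) empty])
      show "x \<in> at_pole c" using x unfolding at_S_def at_pole_def by auto
      show "c' 0 \<in> path_nodes d p" "c' x \<in> path_nodes d p"
        using xIG s dp unfolding c'_def by (auto simp: IV_in_path_nodes_iff)
      show "\<And>g. g \<in> Ign \<Longrightarrow> g \<noteq> x \<Longrightarrow> c' g = c g" unfolding c'_def by auto
    qed
    then show ?thesis using good_moveI_meet[OF legal] meet by auto
  next
    case False
    then have qd: "q < d p" using s by simp
    have meet: "meet k c' = {}" using meet_upd[OF W xIG] s False unfolding c'_def by simp
    have occ: "occupants c' j = (if j = p then {x} else occupants c j)" for j
      using empty xIG dp cx unfolding c'_def occupants_upd by (auto simp: occupants_def)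
    have "n_occ c' j \<le> 1" if "j < l" for j
    proof -
      have "n_occ c j \<le> 1" using e0 that excess_eq_0_iff by blast
      then show ?thesis using occ[of j] unfolding n_occ_def by simp
    qed
    then have e': "excess c' = 0" using excess_eq_0_iff by blast
    have "above_weight c' = above_weight c" "none_below c' < none_below c"
      unfolding above_weight_def none_below_def using occ[of p] empty c'0 s qd by (simp_all add: c'_def)
    moreover have "at_N c' = at_N c" using cx unfolding c'_def at_N_upd by (auto simp: at_N_def)
    moreover have "total_off_dist c' = total_off_dist c"
      using total_off_dist_upd[OF xIG c'_def c'0] s cx by simp
    ultimately have "(c', c) \<in> measures potential"
      using potential_descent_phase1[OF phase_source_inside[OF e0 s(1)] e'] c'0 s by simp
    then show ?thesis using good_moveI_descent[OF legal meet] by blast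
  qed
qed

lemma good_move_source_inside_cut:
  assumes W: "wf_conf l d k c" and F: "valid_round l d F" and e0: "excess c = 0"
    and s: "c 0 = IV p q" "p < l" "1 \<le> q" "q \<le> d p" and E: "pedge d p (q - 1) \<notin> F"
  shows "\<exists>c'. good_move l d k potential F c c'"
proof -
  have other_edges: "pedge d p m \<in> F" if "m \<le> d p" "m \<noteq> q - 1" for m
  proof (rule ccontr)
    assume "pedge d p m \<notin> F"
    moreover have "q - 1 \<le> d p" using s by simp
    ultimately have "m = q - 1" using cut_unique[OF F dpos s(2) that(1) _ _ E] by blast
    then show False using that(2) by simp
  qed
  obtain r where r: "r < l" "\<And>m. m \<le> d r \<Longrightarrow> pedge d r m \<in> F"
    using intact_path_exists[OF F dpos] by blast
  have rp: "r \<noteq> p" using E r(2)[of "q - 1"] s by auto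
  have via_r: ?thesis if "at_N c \<noteq> {}"
    using good_move_via_intact_path[OF W e0 s r(1) rp r(2)] that by blast
  show ?thesis
  proof (cases "occupants c p = {}")
    case False
    then obtain y where Ay: "occupants c p = {y}" using occupants_at_most_one[OF e0 s(2)] by blast
    then have yA: "y \<in> occupants c p" by simp
    define m where "m = vidx (c y)"
    have m: "1 \<le> m" "m \<le> d p" "c y = IV p m" using occupant_position[OF yA] unfolding m_def by auto
    have "c y \<noteq> c 0" using wf_conf_not_on_source[OF W] yA occupants_subset by blast
    then have mq: "m \<noteq> q" using m s by auto
    have "m - 1 \<le> d p" "m - 1 \<noteq> q - 1" using mq m s by linarith+
    then have Em: "pedge d p (vidx (c y) - 1) \<in> F" using other_edges unfolding m_def by blast
    show ?thesis
    proof (cases "q < m")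
      case True
      then show ?thesis using good_move_lower_occupant[OF W e0 s Ay _ Em] unfolding m_def by blast
    next
      case False
      then have "vidx (c y) < q" using mq unfolding m_def by simp
      then show ?thesis using good_move_upper_occupant_climbs[OF W e0 s(1,2) Ay _ Em] by blast
    qed
  next
    case empty: True
    show ?thesis
    proof (cases "at_S c = {}")
      case False
      then obtain x where "x \<in> at_S c" by blast
      moreover have "pedge d p (d p) \<in> F" using other_edges s by simp
      ultimately show ?thesis using good_move_S_agent_enters_source_path[OF W e0 s empty] by blast
    next
      case True
      then have "at_N c \<noteq> {}"
        using at_pole_nonempty_if_empty_path[OF W e0 s(2) empty] at_pole_eq_Un by auto
      then show ?thesis by (rule via_r)
    qed
  qed
qed

lemma good_move_source_inside:
  assumes W: "wf_conf l d k c" and F: "valid_round l d F" and e0: "excess c = 0" and n: "c 0 \<noteq> NP" "c 0 \<noteq> SP"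
  shows "\<exists>c'. good_move l d k potential F c c'"
proof -
  obtain p q where s: "c 0 = IV p q" "p < l" "1 \<le> q" "q \<le> d p" using source_inside[OF W n] by blast
  show ?thesis
  proof (cases "pedge d p (q - 1) \<in> F")
    case True then show ?thesis using good_move_source_inside_open[OF W F e0 s] by blast
  next
    case False then show ?thesis using good_move_source_inside_cut[OF W F e0 s] by blast
  qed
qed

section \<open>Moves when some path is crowded\<close>

definition shift :: "conf \<Rightarrow> nat set \<Rightarrow> tvert \<Rightarrow> tvert \<Rightarrow> conf" where
  "shift c M v u = (\<lambda>g. if g \<in> M then u else if g = 0 \<and> c 0 = u then v else c g)"

lemma legal_move_shift:
  assumes "\<And>a. a \<in> M \<Longrightarrow> c a = v" "{v, u} \<in> F"
  shows "legal_move k F c (shift c M v u)"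
  using assms unfolding legal_move_def shift_def by (auto simp: insert_commute)

lemma meet_shift:
  assumes W: "wf_conf l d k c" and M: "M \<subseteq> Ign" "\<And>a. a \<in> M \<Longrightarrow> c a = v" and uv: "u \<noteq> v"
    and swap: "c 0 = u \<Longrightarrow> {g \<in> Ign. c g = v} \<subseteq> M"
  shows "meet k (shift c M v u) = {}"
proof (rule meet_empty)
  fix g assume g: "g \<in> Ign"
  have "0 \<notin> M" using M by auto
  then show "shift c M v u g \<noteq> shift c M v u 0"
    using g uv swap wf_conf_not_on_source[OF W g] M(2)[of g] unfolding shift_def by auto
qed

lemma shift_other_path:
  assumes M: "M \<subseteq> occupants c j" and u: "u \<in> path_nodes d j" and x: "x \<noteq> j"
  shows "occupants (shift c M v u) x = occupants c x"
    and "\<And>a. a \<in> occupants c x \<Longrightarrow> shift c M v u a = c a"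
proof -
  have "\<not> inside x u" using path_nodes_not_inside_other[OF u x] .
  moreover have "a \<notin> M" if "a \<in> occupants c x" for a
    using that M occupants_disjoint[OF x] by blast
  ultimately show "occupants (shift c M v u) x = occupants c x"
    using M unfolding occupants_def shift_def by auto
  show "shift c M v u a = c a" if "a \<in> occupants c x" for a
    using \<open>\<And>a. a \<in> occupants c x \<Longrightarrow> a \<notin> M\<close>[OF that] occupant_nonzero[OF that]
    unfolding shift_def by simp
qed

lemma crowd_end_group:
  assumes cr: "2 \<le> n_occ c j" and tt: "{t, t'} = {min_pos c j, max_pos c j}"
  obtains M where "M \<subseteq> occupants c j" "M \<noteq> {}" "\<And>a. a \<in> M \<Longrightarrow> c a = IV j t"
    "\<exists>b\<in>occupants c j - M. vidx (c b) = t'"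
    "t \<noteq> t' \<Longrightarrow> {a \<in> occupants c j. c a = IV j t} \<subseteq> M"
proof -
  have ne: "occupants c j \<noteq> {}" using crowded_nonempty[OF cr] .
  have attained: "\<exists>a\<in>occupants c j. vidx (c a) = x" if "x \<in> {t, t'}" for x
    using that tt min_pos_attained[OF ne] max_pos_attained[OF ne] by auto
  obtain a0 where a0: "a0 \<in> occupants c j" "vidx (c a0) = t" using attained by blast
  define M where "M = (if t \<noteq> t' then {a \<in> occupants c j. vidx (c a) = t} else {a0})"
  show ?thesis
  proof (rule that[of M])
    show "M \<subseteq> occupants c j" "M \<noteq> {}" using a0 unfolding M_def by auto
    show "c a = IV j t" if "a \<in> M" for a
    proof -
      have a: "a \<in> occupants c j" "vidx (c a) = t" using that a0 unfolding M_def by (auto split: if_splits)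
      then show ?thesis using occupant_position[OF a(1)] by simp
    qed
    show "t \<noteq> t' \<Longrightarrow> {a \<in> occupants c j. c a = IV j t} \<subseteq> M" unfolding M_def by auto
    show "\<exists>b\<in>occupants c j - M. vidx (c b) = t'"
    proof (cases "t = t'")
      case True
      obtain b where "b \<in> occupants c j" "b \<noteq> a0" using crowded_other_occupant[OF cr a0(1)] by blast
      moreover have "min_pos c j \<in> {t'}" "max_pos c j \<in> {t'}" using tt True by auto
      then have "vidx (c b) = t'"
        using min_pos_le[OF calculation(1)] max_pos_ge[OF calculation(1)] by simp
      ultimately show ?thesis using True unfolding M_def by auto
    next
      case False
      then show ?thesis using attained[of t'] unfolding M_def by auto
    qed
  qed
qed

lemma excess_less_group_leaves:
  assumes j: "j < l" and occ: "occupants c' j = occupants c j - M" and M: "M \<subseteq> occupants c j" "M \<noteq> {}"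
    and b: "b \<in> occupants c j - M" and other: "\<And>x. x \<noteq> j \<Longrightarrow> n_occ c' x = n_occ c x"
  shows "excess c' < excess c"
proof (rule excess_less[OF j])
  show "n_occ c' j < n_occ c j"
    unfolding n_occ_def occ using M by (intro psubset_card_mono) auto
  have "occupants c j - M \<noteq> {}" using b by blast
  then show "1 \<le> n_occ c' j" unfolding n_occ_def occ by (simp add: Suc_leI card_gt_0_iff)
qed (use other in auto)

lemma good_move_crowd_up:
  assumes W: "wf_conf l d k c" and e: "0 < excess c" and j: "j < l" and cr: "2 \<le> n_occ c j"
    and E: "pedge d j (min_pos c j - 1) \<in> F"
    and ok: "min_pos c j < max_pos c j \<or> pnode d j (min_pos c j - 1) \<noteq> c 0"
  shows "\<exists>c'. good_move l d k potential F c c'"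
proof -
  let ?T = "min_pos c j" and ?B = "max_pos c j"
  have ne: "occupants c j \<noteq> {}" using crowded_nonempty[OF cr] .
  have TB: "1 \<le> ?T" "?T \<le> ?B" "?B \<le> d j" using min_max_pos_range[OF ne] min_pos_le_max_pos[OF ne] by auto
  obtain M where M: "M \<subseteq> occupants c j" "M \<noteq> {}" "\<And>a. a \<in> M \<Longrightarrow> c a = IV j ?T"
    and b: "\<exists>b\<in>occupants c j - M. vidx (c b) = ?B"
    and all: "?T \<noteq> ?B \<Longrightarrow> {a \<in> occupants c j. c a = IV j ?T} \<subseteq> M"
    using crowd_end_group[OF cr, of ?T ?B] by blast
  define u where "u = pnode d j (?T - 1)"
  have u: "u \<in> path_nodes d j" "u \<noteq> IV j ?T"
    unfolding u_def using TB by (auto intro!: pnode_in_path_nodes simp del: pnode_interior)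
      (auto simp: pnode_def split: if_splits)
  define c' where "c' = shift c M (IV j ?T) u"
  have legal: "legal_move k F c c'"
    unfolding c'_def using M(3) pedge_rev[OF E] TB u_def by (intro legal_move_shift) auto
  have "{g \<in> Ign. c g = IV j ?T} \<subseteq> M" if "c 0 = u"
    using all ok that TB unfolding u_def occupants_def by auto
  moreover have "M \<subseteq> Ign" using M(1) occupants_subset by blast
  ultimately have meet: "meet k c' = {}"
    unfolding c'_def using meet_shift[OF W _ M(3) u(2)] by blast
  have oth: "n_occ c' x = n_occ c x" "pole_gap c' x = pole_gap c x" if "x \<noteq> j" for x
    using path_stats_cong[OF shift_other_path[OF M(1) u(1) that]] unfolding c'_def by auto
  have shifted: "c' a = (if a \<in> M then u else c a)" if "a \<in> Ign" for a
    using that unfolding c'_def shift_def by auto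
  show ?thesis
  proof (cases "?T = 1")
    case True
    then have "u = NP" unfolding u_def by simp
    then have "occupants c' j = occupants c j - M"
      using shifted M(1) unfolding occupants_def by (auto split: if_splits)
    then have "excess c' < excess c" using excess_less_group_leaves[OF j _ M(1,2)] b oth by blast
    then have "(c', c) \<in> measures potential" using potential_descent_excess[OF e] by blast
    then show ?thesis using good_moveI_descent[OF legal meet] by blast
  next
    case False
    then have u': "u = IV j (?T - 1)" "1 \<le> ?T - 1" unfolding u_def using TB by simp_all
    have occ_j: "occupants c' j = occupants c j"
      using shifted M(1) u' TB unfolding occupants_def by (auto split: if_splits)
    have pos: "vidx (c' x) = (if x \<in> M then ?T - 1 else vidx (c x))" if "x \<in> occupants c' j" for x
      using that occ_j shifted u' occupant_Ign by auto
    obtain a0 where a0: "a0 \<in> M" using M(2) by blast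
    have "min_pos c' j = ?T - 1"
    proof (rule min_posI)
      show "a0 \<in> occupants c' j" using occ_j a0 M(1) by auto
      then show "vidx (c' a0) = ?T - 1" using pos a0 by simp
      show "?T - 1 \<le> vidx (c' x)" if "x \<in> occupants c' j" for x
        using pos[OF that] min_pos_le[of x c j] that occ_j by auto
    qed
    moreover have "max_pos c' j = ?B"
    proof -
      obtain b where b: "b \<in> occupants c j - M" "vidx (c b) = ?B" using b by blast
      show ?thesis
      proof (rule max_posI)
        show "b \<in> occupants c' j" using occ_j b by simp
        then show "vidx (c' b) = ?B" using pos b by simp
        show "vidx (c' x) \<le> ?B" if "x \<in> occupants c' j" for x
          using pos[OF that] max_pos_ge[of x c j] that occ_j TB by auto
      qed
    qed
    moreover have n_occ_j: "n_occ c' j = n_occ c j" unfolding n_occ_def using occ_j by simp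
    ultimately have "pole_gap c' j < pole_gap c j" unfolding pole_gap_def using cr TB False by simp
    then have "total_pole_gap c' < total_pole_gap c" using total_pole_gap_less[OF j] oth by blast
    moreover have "n_occ c' x = n_occ c x" for x using n_occ_j oth(1)[of x] by (cases "x = j") auto
    then have "excess c' = excess c" by (rule excess_cong)
    ultimately have "(c', c) \<in> measures potential" using potential_descent_excess[OF e] by simp
    then show ?thesis using good_moveI_descent[OF legal meet] by blast
  qed
qed

lemma good_move_crowd_down:
  assumes W: "wf_conf l d k c" and e: "0 < excess c" and j: "j < l" and cr: "2 \<le> n_occ c j"
    and E: "pedge d j (max_pos c j) \<in> F"
    and ok: "min_pos c j < max_pos c j \<or> pnode d j (Suc (max_pos c j)) \<noteq> c 0"
  shows "\<exists>c'. good_move l d k potential F c c'"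
proof -
  let ?T = "min_pos c j" and ?B = "max_pos c j"
  have ne: "occupants c j \<noteq> {}" using crowded_nonempty[OF cr] .
  have TB: "1 \<le> ?T" "?T \<le> ?B" "?B \<le> d j" using min_max_pos_range[OF ne] min_pos_le_max_pos[OF ne] by auto
  obtain M where M: "M \<subseteq> occupants c j" "M \<noteq> {}" "\<And>a. a \<in> M \<Longrightarrow> c a = IV j ?B"
    and b: "\<exists>b\<in>occupants c j - M. vidx (c b) = ?T"
    and all: "?B \<noteq> ?T \<Longrightarrow> {a \<in> occupants c j. c a = IV j ?B} \<subseteq> M"
    using crowd_end_group[OF cr insert_commute] by blast
  define u where "u = pnode d j (Suc ?B)"
  have u: "u \<in> path_nodes d j" "u \<noteq> IV j ?B"
    unfolding u_def using TB by (auto intro!: pnode_in_path_nodes simp del: pnode_interior)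
      (auto simp: pnode_def split: if_splits)
  define c' where "c' = shift c M (IV j ?B) u"
  have legal: "legal_move k F c c'"
    unfolding c'_def using M(3) pedge_fwd[OF E] TB u_def by (intro legal_move_shift) auto
  have "{g \<in> Ign. c g = IV j ?B} \<subseteq> M" if "c 0 = u"
    using all ok that TB unfolding u_def occupants_def by auto
  moreover have "M \<subseteq> Ign" using M(1) occupants_subset by blast
  ultimately have meet: "meet k c' = {}"
    unfolding c'_def using meet_shift[OF W _ M(3) u(2)] by blast
  have oth: "n_occ c' x = n_occ c x" "pole_gap c' x = pole_gap c x" if "x \<noteq> j" for x
    using path_stats_cong[OF shift_other_path[OF M(1) u(1) that]] unfolding c'_def by auto
  have shifted: "c' a = (if a \<in> M then u else c a)" if "a \<in> Ign" for a
    using that unfolding c'_def shift_def by auto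
  show ?thesis
  proof (cases "?B = d j")
    case True
    then have "u = SP" unfolding u_def by simp
    then have "occupants c' j = occupants c j - M"
      using shifted M(1) unfolding occupants_def by (auto split: if_splits)
    then have "excess c' < excess c" using excess_less_group_leaves[OF j _ M(1,2)] b oth by blast
    then have "(c', c) \<in> measures potential" using potential_descent_excess[OF e] by blast
    then show ?thesis using good_moveI_descent[OF legal meet] by blast
  next
    case False
    then have u': "u = IV j (Suc ?B)" "Suc ?B \<le> d j" unfolding u_def using TB by simp_all
    have occ_j: "occupants c' j = occupants c j"
      using shifted M(1) u' TB unfolding occupants_def by (auto split: if_splits)
    have pos: "vidx (c' x) = (if x \<in> M then Suc ?B else vidx (c x))" if "x \<in> occupants c' j" for x
      using that occ_j shifted u' occupant_Ign by auto
    obtain a0 where a0: "a0 \<in> M" using M(2) by blast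
    have "max_pos c' j = Suc ?B"
    proof (rule max_posI)
      show "a0 \<in> occupants c' j" using occ_j a0 M(1) by auto
      then show "vidx (c' a0) = Suc ?B" using pos a0 by simp
      show "vidx (c' x) \<le> Suc ?B" if "x \<in> occupants c' j" for x
        using pos[OF that] max_pos_ge[of x c j] that occ_j by auto
    qed
    moreover have "min_pos c' j = ?T"
    proof -
      obtain b where b: "b \<in> occupants c j - M" "vidx (c b) = ?T" using b by blast
      show ?thesis
      proof (rule min_posI)
        show "b \<in> occupants c' j" using occ_j b by simp
        then show "vidx (c' b) = ?T" using pos b by simp
        show "?T \<le> vidx (c' x)" if "x \<in> occupants c' j" for x
          using pos[OF that] min_pos_le[of x c j] that occ_j TB by auto
      qed
    qed
    moreover have n_occ_j: "n_occ c' j = n_occ c j" unfolding n_occ_def using occ_j by simp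
    ultimately have "pole_gap c' j < pole_gap c j" unfolding pole_gap_def using cr TB False by simp
    then have "total_pole_gap c' < total_pole_gap c" using total_pole_gap_less[OF j] oth by blast
    moreover have "n_occ c' x = n_occ c x" for x using n_occ_j oth(1)[of x] by (cases "x = j") auto
    then have "excess c' = excess c" by (rule excess_cong)
    ultimately have "(c', c) \<in> measures potential" using potential_descent_excess[OF e] by simp
    then show ?thesis using good_moveI_descent[OF legal meet] by blast
  qed
qed

(* All occupants of path j sit on one node; the edge on one side of it is cut and the
   node on the other side holds the source, so none of them can move towards a pole. *)
definition stalled_crowd :: "tvert set set \<Rightarrow> conf \<Rightarrow> nat \<Rightarrow> bool" where
  "stalled_crowd F c j \<longleftrightarrow> min_pos c j = max_pos c j \<and>
     ((pnode d j (min_pos c j - 1) = c 0 \<and> pedge d j (min_pos c j - 1) \<in> F \<and> pedge d j (min_pos c j) \<notin> F)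
    \<or> (pnode d j (Suc (min_pos c j)) = c 0 \<and> pedge d j (min_pos c j) \<in> F \<and> pedge d j (min_pos c j - 1) \<notin> F))"

lemma stalled_crowdI:
  assumes F: "valid_round l d F" and j: "j < l" and cr: "2 \<le> n_occ c j"
    and nup: "\<not> (pedge d j (min_pos c j - 1) \<in> F
        \<and> (min_pos c j < max_pos c j \<or> pnode d j (min_pos c j - 1) \<noteq> c 0))"
    and ndn: "\<not> (pedge d j (max_pos c j) \<in> F
        \<and> (min_pos c j < max_pos c j \<or> pnode d j (Suc (max_pos c j)) \<noteq> c 0))"
  shows "stalled_crowd F c j"
proof -
  let ?T = "min_pos c j" and ?B = "max_pos c j"
  have ne: "occupants c j \<noteq> {}" using crowded_nonempty[OF cr] .
  have TB: "1 \<le> ?T" "?T \<le> ?B" "?B \<le> d j" using min_max_pos_range[OF ne] min_pos_le_max_pos[OF ne] by auto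
  show ?thesis
  proof (cases "pedge d j (?T - 1) \<in> F")
    case True
    then have T1: "?T = ?B" "pnode d j (?T - 1) = c 0" using nup TB by auto
    have "pedge d j ?B \<notin> F"
    proof
      assume "pedge d j ?B \<in> F"
      then have "pnode d j (Suc ?B) = c 0" using ndn T1 by auto
      then have "pnode d j (?T - 1) = pnode d j (Suc ?B)" using T1 by simp
      then have "?T - 1 = Suc ?B" using pnode_inj[of "?T - 1" d j "Suc ?B"] TB by simp
      then show False using TB by simp
    qed
    then show ?thesis using T1 True unfolding stalled_crowd_def by simp
  next
    case False
    have "pedge d j ?B \<in> F"
    proof (rule ccontr)
      assume "pedge d j ?B \<notin> F"
      then have "?T - 1 = ?B" using cut_unique[OF F dpos j _ TB(3) False] TB by simp
      then show False using TB by simp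
    qed
    then have "?T = ?B" "pnode d j (Suc ?B) = c 0" using ndn TB by auto
    then show ?thesis using False \<open>pedge d j ?B \<in> F\<close> unfolding stalled_crowd_def by simp
  qed
qed

lemma stalled_crowd_source_N:
  assumes j: "j < l" and cr: "2 \<le> n_occ c j" and b: "stalled_crowd F c j" and s: "c 0 = NP"
  shows "min_pos c j = 1 \<and> max_pos c j = 1 \<and> pedge d j 1 \<notin> F"
proof -
  have rng: "1 \<le> min_pos c j" "min_pos c j \<le> d j"
    using min_max_pos_range[OF crowded_nonempty[OF cr]] min_pos_le_max_pos[OF crowded_nonempty[OF cr]] by auto
  have "pnode d j (Suc (min_pos c j)) \<noteq> NP" by (simp add: pnode_def)
  then have N: "pnode d j (min_pos c j - 1) = NP" and "pedge d j (min_pos c j) \<notin> F"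
    using b s unfolding stalled_crowd_def by auto
  have "min_pos c j - 1 \<le> Suc (d j)" using rng by simp
  then have "min_pos c j - 1 = 0" using pnode_eq_NP_iff N by blast
  then have "min_pos c j = 1" using rng by simp
  then show ?thesis using b \<open>pedge d j (min_pos c j) \<notin> F\<close> unfolding stalled_crowd_def by simp
qed

lemma stalled_crowd_source_S:
  assumes j: "j < l" and cr: "2 \<le> n_occ c j" and b: "stalled_crowd F c j" and s: "c 0 = SP"
  shows "min_pos c j = d j \<and> max_pos c j = d j \<and> pedge d j (d j - 1) \<notin> F"
proof -
  have rng: "1 \<le> min_pos c j" "min_pos c j \<le> d j"
    using min_max_pos_range[OF crowded_nonempty[OF cr]] min_pos_le_max_pos[OF crowded_nonempty[OF cr]] by auto
  have "pnode d j (min_pos c j - 1) \<noteq> SP" using rng by (auto simp: pnode_def)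
  then have S: "pnode d j (Suc (min_pos c j)) = SP" and "pedge d j (min_pos c j - 1) \<notin> F"
    using b s unfolding stalled_crowd_def by auto
  have "Suc (min_pos c j) \<le> Suc (d j)" using rng by simp
  then have "min_pos c j = d j" using pnode_eq_SP_iff S by fastforce
  then show ?thesis using b \<open>pedge d j (min_pos c j - 1) \<notin> F\<close> unfolding stalled_crowd_def by simp
qed

lemma good_move_source_leaves_pole:
  assumes W: "wf_conf l d k c" and e: "0 < excess c" and stall: "0 < stall_rank c"
    and r: "inside r w" "w' \<in> path_nodes d r" "w' \<noteq> w" and E: "{c 0, w} \<in> F" "{w, w'} \<in> F"
    and n: "n_occ c r \<le> 1"
  shows "\<exists>c'. good_move l d k potential F c c'"
proof -
  note enter = enter_move[of r w w' c F, OF r E]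
  have "n_occ (enter c w w') r \<le> n_occ c r" unfolding n_occ_def by (rule card_mono[OF finite_occupants enter(6)])
  then have n': "n_occ (enter c w w') r \<le> 1" using n by simp
  have "excess (enter c w w') = excess c \<and> total_pole_gap (enter c w w') = total_pole_gap c"
    using excess_total_pole_gap_cong[of r "enter c w w'" c] enter(4,5) n n' by blast
  moreover obtain m where "w = IV r m" using r(1) insideD by blast
  then have "stall_rank (enter c w w') = 0" using stall_rank_inside[of "enter c w w'" r m] n' enter(3) by simp
  ultimately have "(enter c w w', c) \<in> measures potential" using potential_descent_excess[OF e] stall by simp
  then show ?thesis using good_moveI_descent[OF enter(1,2)] by blast
qed

lemma good_move_stalled_N:
  assumes W: "wf_conf l d k c" and F: "valid_round l d F" and e: "0 < excess c" and s: "c 0 = NP"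
    and stl: "\<And>j. j < l \<Longrightarrow> 2 \<le> n_occ c j
        \<Longrightarrow> min_pos c j = 1 \<and> max_pos c j = 1 \<and> pedge d j 1 \<notin> F"
  shows "\<exists>c'. good_move l d k potential F c c'"
proof -
  obtain j0 where j0: "j0 < l" "2 \<le> n_occ c j0" using excess_pos_crowded[OF e] by blast
  have "stall_rank c = 1" using stl[OF j0] j0 s unfolding stall_rank_def by auto
  obtain r where r: "r < l" "\<And>m. m \<le> d r \<Longrightarrow> pedge d r m \<in> F" using intact_path_exists[OF F dpos] by blast
  have dr: "1 \<le> d r" using dpos r by blast
  have "n_occ c r \<le> 1" using stl[OF r(1)] r(2)[of 1] dr by fastforce
  moreover have "{c 0, IV r 1} \<in> F" using pedge_fwd[OF r(2)[of 0]] s dr by simp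
  moreover have "{IV r 1, pnode d r 2} \<in> F" using pedge_fwd[OF r(2)[of 1]] dr by (simp add: numeral_2_eq_2)
  moreover have "pnode d r 2 \<in> path_nodes d r" by (rule pnode_in_path_nodes) (use dr in simp)
  moreover have "pnode d r 2 \<noteq> IV r 1" using dr by (auto simp: pnode_def)
  ultimately show ?thesis
    using good_move_source_leaves_pole[OF W e _ _ _ _ _ _, of r "IV r 1" "pnode d r 2"]
      \<open>stall_rank c = 1\<close> dr by simp
qed

lemma good_move_stalled_S:
  assumes W: "wf_conf l d k c" and F: "valid_round l d F" and e: "0 < excess c" and s: "c 0 = SP"
    and stl: "\<And>j. j < l \<Longrightarrow> 2 \<le> n_occ c j
        \<Longrightarrow> min_pos c j = d j \<and> max_pos c j = d j \<and> pedge d j (d j - 1) \<notin> F"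
  shows "\<exists>c'. good_move l d k potential F c c'"
proof -
  obtain j0 where j0: "j0 < l" "2 \<le> n_occ c j0" using excess_pos_crowded[OF e] by blast
  have "stall_rank c = 1" using stl[OF j0] j0 s unfolding stall_rank_def by auto
  obtain r where r: "r < l" "\<And>m. m \<le> d r \<Longrightarrow> pedge d r m \<in> F" using intact_path_exists[OF F dpos] by blast
  have dr: "1 \<le> d r" using dpos r by blast
  have "n_occ c r \<le> 1" using stl[OF r(1)] r(2)[of "d r - 1"] by fastforce
  moreover have "{c 0, IV r (d r)} \<in> F" using pedge_rev[OF r(2)[of "d r"]] s dr by simp
  moreover have "{IV r (d r), pnode d r (d r - 1)} \<in> F"
    using pedge_rev[OF r(2)[of "d r - 1"]] dr by simp
  moreover have "pnode d r (d r - 1) \<in> path_nodes d r" by (rule pnode_in_path_nodes) (use dr in simp)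
  moreover have "pnode d r (d r - 1) \<noteq> IV r (d r)" using dr by (auto simp: pnode_def)
  ultimately show ?thesis
    using good_move_source_leaves_pole[OF W e _ _ _ _ _ _, of r "IV r (d r)" "pnode d r (d r - 1)"]
      \<open>stall_rank c = 1\<close> dr by simp
qed

lemma good_move_settle_pole_agent:
  assumes W: "wf_conf l d k c" and e: "0 < excess c" and s: "c 0 = IV p q"
    and u: "u < l" "u \<noteq> p" "n_occ c u = 0" and z: "z \<in> at_pole c" and v: "v = IV u 1 \<or> v = IV u (d u)"
    and E: "{c z, v} \<in> F" and stall3: "stall_rank c = 3"
  shows "\<exists>c'. good_move l d k potential F c c'"
proof -
  have du: "1 \<le> d u" using dpos u by blast
  have zIG: "z \<in> Ign" using z unfolding at_pole_def by auto
  have cz: "c z = NP \<or> c z = SP" using z unfolding at_pole_def by auto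
  define c' where "c' = c(z := v)"
  have legal: "legal_move k F c c'"
    using E unfolding c'_def by (intro legal_move_upd) simp
  have vin: "inside u v" using v du by auto
  have c'0: "c' 0 = c 0" using zIG unfolding c'_def by auto
  have meet: "meet k c' = {}" using meet_upd[OF W zIG, of v] s vin u(2) unfolding c'_def by (auto simp: inside_def)
  have Au: "occupants c u = {}" using u unfolding n_occ_def by simp
  have Au': "occupants c' u = {z}" using Au zIG vin unfolding c'_def occupants_upd by auto
  have occ_other: "occupants c' x = occupants c x" if "x \<noteq> u" for x
    using that cz vin inside_unique unfolding c'_def occupants_upd by (auto simp: occupants_def)
  have pos_other: "c' a = c a" if "a \<in> occupants c x" for a x
  proof -
    have "a \<noteq> z" using that cz unfolding occupants_def by auto
    then show ?thesis unfolding c'_def by simp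
  qed
  have "n_occ c u \<le> 1" "n_occ c' u \<le> 1" using Au Au' unfolding n_occ_def by simp_all
  then have excess_eq: "excess c' = excess c" and gap_eq: "total_pole_gap c' = total_pole_gap c"
    using excess_total_pole_gap_cong[of u c' c] occ_other pos_other by blast+
  have "at_pole c' = at_pole c - {z}" using vin unfolding c'_def at_pole_upd by (auto simp: inside_def)
  then have "card (at_pole c') < card (at_pole c)" using z card_Diff1_less[OF finite_at_pole z] by simp
  moreover have "stall_rank c' < stall_rank c \<or> stall_rank c' = stall_rank c" using stall_rank_le_3[of c'] stall3 by linarith
  ultimately have "(c', c) \<in> measures potential"
    using potential_descent_excess[OF e] excess_eq gap_eq by auto
  then show ?thesis using good_moveI_descent[OF legal meet] by blast
qed

lemma good_move_stalled_block:
  assumes W: "wf_conf l d k c" and F: "valid_round l d F" and e: "0 < excess c"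
    and s: "c 0 = IV p q" "p < l" "1 \<le> q" "q \<le> d p"
    and cl: "\<And>a. a \<in> occupants c p \<Longrightarrow> c a = IV p v" and ne: "occupants c p \<noteq> {}"
    and Eb: "{IV p v, IV p q} \<in> F" and N_nonempty: "at_N c \<noteq> {}" and S_nonempty: "at_S c \<noteq> {}"
    and stall3: "stall_rank c = 3"
  shows "\<exists>c'. good_move l d k potential F c c'"
proof (cases "\<exists>u<l. u \<noteq> p \<and> n_occ c u = 0")
  case True
  then obtain u where u: "u < l" "u \<noteq> p" "n_occ c u = 0" by blast
  have du: "1 \<le> d u" using dpos u by blast
  show ?thesis
  proof (cases "pedge d u 0 \<in> F")
    case True
    obtain z where z: "z \<in> at_N c" using N_nonempty by blast
    have zP: "z \<in> at_pole c" and cz: "c z = NP" using z unfolding at_N_def at_pole_def by auto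
    have "{pnode d u 0, pnode d u (Suc 0)} \<in> F" using True by (rule pedge_fwd)
    then have "{c z, IV u 1} \<in> F" using cz du by simp
    then show ?thesis using good_move_settle_pole_agent[OF W e s(1) u zP _ _ stall3] by blast
  next
    case False
    have "pedge d u (d u) \<in> F"
    proof (rule ccontr)
      assume "pedge d u (d u) \<notin> F"
      then have "0 = d u" using cut_unique[OF F dpos u(1) _ _ False] by simp
      then show False using du by simp
    qed
    obtain x where x: "x \<in> at_S c" using S_nonempty by blast
    have xP: "x \<in> at_pole c" and cx: "c x = SP" using x unfolding at_S_def at_pole_def by auto
    have "{pnode d u (Suc (d u)), pnode d u (d u)} \<in> F" using \<open>pedge d u (d u) \<in> F\<close> by (rule pedge_rev)
    then have "{c x, IV u (d u)} \<in> F" using cx du by simp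
    then show ?thesis using good_move_settle_pole_agent[OF W e s(1) u xP _ _ stall3] by blast
  qed
next
  case False
  obtain a0 where a0: "a0 \<in> occupants c p" using ne by blast
  have a0IG: "a0 \<in> Ign" using a0 by (rule occupant_Ign)
  define c' where "c' = c(a0 := IV p q)"
  have legal: "legal_move k F c c'"
    using Eb cl[OF a0] unfolding c'_def by (intro legal_move_upd) simp
  have meet: "meet k c' = {a0}" using meet_upd[OF W a0IG] s unfolding c'_def by simp
  have occupied: "\<exists>g\<in>Ign - {a0}. inside j (c' g)" if "j < l" "j \<noteq> p" for j
  proof -
    have "\<not> (j < l \<and> j \<noteq> p \<and> n_occ c j = 0)" using False by blast
    then have "n_occ c j \<noteq> 0" using that by simp
    then obtain g where g: "g \<in> occupants c j" unfolding n_occ_def by (metis card.empty ex_in_conv)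
    have "g \<notin> occupants c p" using g occupants_disjoint[OF that(2)] by blast
    then have "g \<noteq> a0" using a0 by blast
    moreover have "g \<in> Ign" "inside j (c g)" using g unfolding occupants_def by auto
    ultimately have "g \<in> Ign - {a0}" "inside j (c' g)" unfolding c'_def by auto
    then show ?thesis by blast
  qed
  have "c' 0 \<in> path_nodes d p" "c' a0 \<in> path_nodes d p"
    using s a0IG unfolding c'_def by (auto simp: IV_in_path_nodes_iff)
  then have "is_target l d k c' (insert 0 {a0})"
    by (rule is_target_other_paths_occupied[OF s(2) a0IG _ _ occupied])
  then have "good_move l d k potential F c c'" using good_moveI_meet[OF legal] meet by simp
  then show ?thesis by blast
qed

lemma good_move_source_step_stall:
  assumes e: "0 < excess c" and E: "{c 0, w} \<in> F" and free: "\<And>g. g \<in> Ign \<Longrightarrow> c g \<noteq> w"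
    and less: "stall_rank (c(0 := w)) < stall_rank c"
  shows "\<exists>c'. good_move l d k potential F c c'"
proof -
  have legal: "legal_move k F c (c(0 := w))" using E by (rule legal_move_upd)
  have meet: "meet k (c(0 := w)) = {}" using free unfolding meet_upd_source by auto
  have "total_pole_gap (c(0 := w)) = total_pole_gap c \<and> excess (c(0 := w)) = excess c"
    by (rule total_pole_gap_excess_cong) simp
  then have "(c(0 := w), c) \<in> measures potential" using potential_descent_excess[OF e] less by simp
  then show ?thesis using good_moveI_descent[OF legal meet] by blast
qed

lemma swap_source_crowd:
  assumes W: "wf_conf l d k c" and s: "c 0 = IV p q" and ne: "occupants c p \<noteq> {}"
    and cl: "\<And>a. a \<in> occupants c p \<Longrightarrow> c a = IV p v" and vq: "v \<noteq> q" and Eb: "{IV p v, IV p q} \<in> F"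
  defines "c' \<equiv> shift c (occupants c p) (IV p v) (IV p q)"
  shows "legal_move k F c c'" "meet k c' = {}"
    and "excess c' = excess c" "total_pole_gap c' = total_pole_gap c"
    and "c' 0 = IV p v" "min_pos c' p = q" "max_pos c' p = q" "n_occ c' p = n_occ c p"
    and "\<And>a. a \<in> Ign \<Longrightarrow> c' a = (if a \<in> occupants c p then IV p q else c a)"
proof -
  have q: "1 \<le> q" "q \<le> d p" "p < l" using W s unfolding wf_conf_def theta_V_def by auto
  obtain a0 where a0: "a0 \<in> occupants c p" using ne by blast
  have v: "1 \<le> v" "v \<le> d p" using occupant_position[OF a0] cl[OF a0] by auto
  have sub: "occupants c p \<subseteq> Ign" by (rule occupants_subset)
  show "legal_move k F c c'" unfolding c'_def using cl Eb by (rule legal_move_shift)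
  have "{g \<in> Ign. c g = IV p v} \<subseteq> occupants c p" using v unfolding occupants_def by auto
  then show "meet k c' = {}" unfolding c'_def using vq by (intro meet_shift[OF W sub cl]) auto
  show shifted: "c' a = (if a \<in> occupants c p then IV p q else c a)" if "a \<in> Ign" for a
    using that unfolding c'_def shift_def by auto
  have "0 \<notin> occupants c p" using sub by auto
  then show "c' 0 = IV p v" using s unfolding c'_def shift_def by auto
  have u: "IV p q \<in> path_nodes d p" using q by (simp add: IV_in_path_nodes_iff)
  have other: "occupants c' x = occupants c x" "\<And>a. a \<in> occupants c x \<Longrightarrow> c' a = c a" if "x \<noteq> p" for x
    using shift_other_path[OF subset_refl u that] unfolding c'_def by auto
  have "a \<in> occupants c' p \<longleftrightarrow> a \<in> occupants c p" for a
  proof (cases "a \<in> Ign")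
    case a: True
    show ?thesis
    proof (cases "a \<in> occupants c p")
      case True
      then show ?thesis using shifted[OF a] q a unfolding occupants_def[of c'] by simp
    next
      case False
      then show ?thesis using shifted[OF a] a unfolding occupants_def by simp
    qed
  qed (auto simp: occupants_def)
  then have occ: "occupants c' p = occupants c p" by blast
  have at_q: "vidx (c' a) = q" if "a \<in> occupants c' p" for a
    using that occ shifted occupant_Ign by auto
  show "min_pos c' p = q" by (rule min_posI[of a0]) (use a0 occ at_q in auto)
  show "max_pos c' p = q" by (rule max_posI[of a0]) (use a0 occ at_q in auto)
  have "min_pos c p = v" "max_pos c p = v"
    by (rule min_posI[of a0], use a0 cl in auto) (rule max_posI[of a0], use a0 cl in auto)
  show "n_occ c' p = n_occ c p" unfolding n_occ_def occ ..
  have "n_occ c' x - 1 = n_occ c x - 1 \<and> pole_gap c' x = pole_gap c x" for x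
  proof (cases "x = p")
    case True
    then show ?thesis
      using \<open>min_pos c' p = q\<close> \<open>max_pos c' p = q\<close> \<open>min_pos c p = v\<close> \<open>max_pos c p = v\<close>
        \<open>n_occ c' p = n_occ c p\<close> q v unfolding pole_gap_def by simp
  next
    case False
    then show ?thesis using path_stats_cong[OF other[OF False]] by simp
  qed
  then show "excess c' = excess c" "total_pole_gap c' = total_pole_gap c"
    unfolding excess_def total_pole_gap_def by simp_all
qed

lemma path_stats_upd_source:
  "min_pos (c(0 := w)) p = min_pos c p" "max_pos (c(0 := w)) p = max_pos c p"
  "n_occ (c(0 := w)) p = n_occ c p"
proof -
  have "(c(0 := w)) a = c a" if "a \<in> occupants c p" for a using occupant_nonzero[OF that] by simp
  then show "min_pos (c(0 := w)) p = min_pos c p" "max_pos (c(0 := w)) p = max_pos c p"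
    "n_occ (c(0 := w)) p = n_occ c p"
    using path_stats_cong[OF occupants_upd_source] by blast+
qed

lemma crowd_on_one_node:
  assumes cr: "2 \<le> n_occ c p" and tb: "min_pos c p = v" "max_pos c p = v"
  shows "1 \<le> v" "v \<le> d p" "\<And>a. a \<in> occupants c p \<Longrightarrow> c a = IV p v"
    and "\<And>g m. g \<in> Ign \<Longrightarrow> 1 \<le> m \<Longrightarrow> m \<le> d p \<Longrightarrow> m \<noteq> v \<Longrightarrow> c g \<noteq> IV p m"
proof -
  show "1 \<le> v" "v \<le> d p" using min_max_pos_range[OF crowded_nonempty[OF cr]] tb by simp_all
  show cl: "c a = IV p v" if "a \<in> occupants c p" for a
  proof -
    have "vidx (c a) = v" using min_pos_le[OF that] max_pos_ge[OF that] tb by simp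
    then show ?thesis using occupant_position[OF that] by simp
  qed
  show "c g \<noteq> IV p m" if "g \<in> Ign" "1 \<le> m" "m \<le> d p" "m \<noteq> v" for g m
  proof
    assume "c g = IV p m"
    then have "g \<in> occupants c p" using that unfolding occupants_def by simp
    then show False using cl \<open>c g = IV p m\<close> that(4) by simp
  qed
qed

lemma good_move_stalled_below:
  assumes W: "wf_conf l d k c" and F: "valid_round l d F" and e: "0 < excess c"
    and s: "c 0 = IV p q" "p < l" "1 \<le> q" "q \<le> d p"
    and cr: "2 \<le> n_occ c p" and tb: "min_pos c p = v" "max_pos c p = v" and qv: "q = Suc v"
    and E1: "pedge d p v \<in> F" and E2: "pedge d p (v - 1) \<notin> F"
  shows "\<exists>c'. good_move l d k potential F c c'"
proof -
  have ne: "occupants c p \<noteq> {}" using crowded_nonempty[OF cr] .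
  note crowd = crowd_on_one_node[OF cr tb]
  note v1 = crowd(1) and cl = crowd(3) and free = crowd(4)
  have edges: "pedge d p m \<in> F" if "m \<le> d p" "m \<noteq> v - 1" for m
  proof (rule ccontr)
    assume "pedge d p m \<notin> F"
    moreover have "v - 1 \<le> d p" using s qv by simp
    ultimately have "m = v - 1" using cut_unique[OF F dpos s(2) that(1) _ _ E2] by blast
    then show False using that(2) by simp
  qed
  have Eq: "{c 0, pnode d p (Suc q)} \<in> F" using pedge_fwd[OF edges[of q]] s qv by simp
  have Eb: "{IV p v, IV p q} \<in> F" using pedge_fwd[OF E1] v1 s qv by simp
  have stall: "stall_rank c = (if q = d p then (if \<exists>a\<in>Ign. c a = SP then 3 else 2) else 1)"
  proof -
    have "2 * q - v = q + 1" using qv by simp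
    then show ?thesis using stall_rank_inside[of c p q, OF s(1)] cr tb qv by (simp add: Let_def)
  qed
  show ?thesis
  proof (cases "q < d p")
    case True
    have "stall_rank (c(0 := IV p (Suc q))) = 0"
      using stall_rank_inside[of "c(0 := IV p (Suc q))" p "Suc q"] path_stats_upd_source tb qv
      by simp
    moreover have "stall_rank c = 1" using stall True by simp
    ultimately show ?thesis
      using good_move_source_step_stall[OF e] Eq free[of _ "Suc q"] True qv by simp
  next
    case False
    then have qd: "q = d p" using s by simp
    show ?thesis
    proof (cases "at_S c = {}")
      case True
      have "stall_rank (c(0 := SP)) \<le> 1" using stall_rank_pole[of "c(0 := SP)"] by simp
      moreover have "stall_rank c = 2" using stall qd True unfolding at_S_def by auto
      ultimately show ?thesis
        using good_move_source_step_stall[OF e] Eq qd True unfolding at_S_def by fastforce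
    next
      case at_S: False
      have stall3: "stall_rank c = 3" using stall qd at_S unfolding at_S_def by auto
      show ?thesis
      proof (cases "3 \<le> d p \<or> at_N c = {}")
        case True
        define c' where "c' = shift c (occupants c p) (IV p v) (IV p q)"
        have "v \<noteq> q" using qv by simp
        note swap = swap_source_crowd[OF W s(1) ne cl this Eb, folded c'_def]
        have "stall_rank c' = (if v - 1 = 0 \<or> v - 1 = Suc (d p)
            then (if \<exists>a\<in>Ign. c' a = pnode d p (v - 1) then 3 else 2) else 1)"
        proof -
          have "2 * v - q = v - 1" using qv by simp
          then show ?thesis using stall_rank_inside[of c' p v] swap(5-8) cr qv by (simp add: Let_def)
        qed
        moreover have "v - 1 \<noteq> Suc (d p)" "pnode d p 0 = NP" using qd qv by simp_all
        moreover have "v - 1 = 0 \<Longrightarrow> at_N c = {}" using True qd qv by simp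
        moreover have "c' a \<noteq> NP" if "a \<in> Ign" "at_N c = {}" for a
          using swap(9)[of a] that unfolding at_N_def by auto
        ultimately have "stall_rank c' < stall_rank c" using stall3 by auto
        then have "(c', c) \<in> measures potential" using potential_descent_excess[OF e] swap(3,4) by simp
        then show ?thesis using good_moveI_descent[OF swap(1,2)] by blast
      next
        case False
        then have "at_N c \<noteq> {}" by simp
        then show ?thesis using good_move_stalled_block[OF W F e s cl ne Eb _ at_S stall3] by blast
      qed
    qed
  qed
qed

lemma good_move_stalled_above:
  assumes W: "wf_conf l d k c" and F: "valid_round l d F" and e: "0 < excess c"
    and s: "c 0 = IV p q" "p < l" "1 \<le> q" "q \<le> d p"
    and cr: "2 \<le> n_occ c p" and tb: "min_pos c p = v" "max_pos c p = v" and qv: "v = Suc q"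
    and E1: "pedge d p q \<in> F" and E2: "pedge d p v \<notin> F"
  shows "\<exists>c'. good_move l d k potential F c c'"
proof -
  have ne: "occupants c p \<noteq> {}" using crowded_nonempty[OF cr] .
  note crowd = crowd_on_one_node[OF cr tb]
  note vd = crowd(2) and cl = crowd(3) and free = crowd(4)
  have edges: "pedge d p m \<in> F" if "m \<le> d p" "m \<noteq> v" for m
    using cut_unique[OF F dpos s(2) that(1) vd _ E2] that by blast
  have Eq: "{c 0, pnode d p (q - 1)} \<in> F" using pedge_rev[OF edges[of "q - 1"]] s qv by simp
  have stall: "stall_rank c = (if q = 1 then (if \<exists>a\<in>Ign. c a = NP then 3 else 2) else 1)"
  proof -
    have "2 * q - v = q - 1" "q - 1 \<noteq> Suc (d p)" using qv s by simp_all
    moreover have "q \<le> 1 \<longleftrightarrow> q = 1" using s(3) by auto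
    ultimately show ?thesis using stall_rank_inside[of c p q, OF s(1)] cr tb qv by (simp add: Let_def)
  qed
  show ?thesis
  proof (cases "2 \<le> q")
    case True
    have "stall_rank (c(0 := IV p (q - 1))) = 0"
      using stall_rank_inside[of "c(0 := IV p (q - 1))" p "q - 1"] path_stats_upd_source tb qv True
      by auto
    moreover have "stall_rank c = 1" using stall True by simp
    ultimately show ?thesis
      using good_move_source_step_stall[OF e] Eq free[of _ "q - 1"] True qv s by simp
  next
    case False
    then have q1: "q = 1" using s by simp
    show ?thesis
    proof (cases "at_N c = {}")
      case True
      have "stall_rank (c(0 := NP)) \<le> 1" using stall_rank_pole[of "c(0 := NP)"] by simp
      moreover have "stall_rank c = 2" using stall q1 True unfolding at_N_def by auto
      ultimately show ?thesis
        using good_move_source_step_stall[OF e] Eq q1 True unfolding at_N_def by fastforce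
    next
      case at_N: False
      have stall3: "stall_rank c = 3" using stall q1 at_N unfolding at_N_def by auto
      have Eb: "{IV p v, IV p q} \<in> F" using pedge_rev[OF E1] vd s qv by simp
      show ?thesis
      proof (cases "3 \<le> d p \<or> at_S c = {}")
        case True
        define c' where "c' = shift c (occupants c p) (IV p v) (IV p q)"
        have "v \<noteq> q" using qv by simp
        note swap = swap_source_crowd[OF W s(1) ne cl this Eb, folded c'_def]
        have "stall_rank c' = (if 3 = Suc (d p) then (if \<exists>a\<in>Ign. c' a = pnode d p 3 then 3 else 2) else 1)"
        proof -
          have "2 * v - q = 3" using qv q1 by simp
          then show ?thesis using stall_rank_inside[of c' p v] swap(5-8) cr qv q1 by (simp add: Let_def)
        qed
        moreover have "3 = Suc (d p) \<Longrightarrow> at_S c = {}" "3 = Suc (d p) \<Longrightarrow> pnode d p 3 = SP"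
          using True by (simp_all add: pnode_def)
        moreover have "c' a \<noteq> SP" if "a \<in> Ign" "at_S c = {}" for a
          using swap(9)[of a] that unfolding at_S_def by auto
        ultimately have "stall_rank c' < stall_rank c" using stall3 by auto
        then have "(c', c) \<in> measures potential" using potential_descent_excess[OF e] swap(3,4) by simp
        then show ?thesis using good_moveI_descent[OF swap(1,2)] by blast
      next
        case False
        then have "at_S c \<noteq> {}" by simp
        then show ?thesis using good_move_stalled_block[OF W F e s cl ne Eb at_N _ stall3] by blast
      qed
    qed
  qed
qed

lemma good_move_all_stalled:
  assumes W: "wf_conf l d k c" and F: "valid_round l d F" and e: "0 < excess c"
    and stalled: "\<And>j. j < l \<Longrightarrow> 2 \<le> n_occ c j \<Longrightarrow> stalled_crowd F c j"
  shows "\<exists>c'. good_move l d k potential F c c'"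
proof -
  consider (N) "c 0 = NP" | (S) "c 0 = SP" | (inside) "c 0 \<noteq> NP" "c 0 \<noteq> SP" by blast
  then show ?thesis
  proof cases
    case N
    then show ?thesis using good_move_stalled_N[OF W F e N] stalled_crowd_source_N stalled by blast
  next
    case S
    then show ?thesis using good_move_stalled_S[OF W F e S] stalled_crowd_source_S stalled by blast
  next
    case inside
    then obtain p q where s: "c 0 = IV p q" "p < l" "1 \<le> q" "q \<le> d p"
      using source_inside[OF W] by blast
    obtain j where j: "j < l" "2 \<le> n_occ c j" using excess_pos_crowded[OF e] by blast
    let ?v = "min_pos c j"
    have rng: "1 \<le> ?v" "?v \<le> d j"
      using min_max_pos_range[OF crowded_nonempty[OF j(2)]] min_pos_le_max_pos[OF crowded_nonempty[OF j(2)]] by auto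
    have tb: "?v = max_pos c j" using stalled[OF j] unfolding stalled_crowd_def by blast
    from stalled[OF j] consider
        "pnode d j (?v - 1) = c 0" "pedge d j (?v - 1) \<in> F" "pedge d j ?v \<notin> F"
      | "pnode d j (Suc ?v) = c 0" "pedge d j ?v \<in> F" "pedge d j (?v - 1) \<notin> F"
      unfolding stalled_crowd_def by blast
    then show ?thesis
    proof cases
      case 1
      then have jp: "j = p" and qv: "?v = Suc q" using s rng pnode_eq_IV_iff[of "?v - 1" d j p q] by auto
      show ?thesis
        by (rule good_move_stalled_above[OF W F e s _ _ _ qv]) (use j jp tb 1 qv in auto)
    next
      case 2
      then have jp: "j = p" and qv: "q = Suc ?v" using s rng pnode_eq_IV_iff[of "Suc ?v" d j p q] by auto
      show ?thesis
        by (rule good_move_stalled_below[OF W F e s _ _ _ qv]) (use j jp tb 2 in auto)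
    qed
  qed
qed

lemma good_move_excess:
  assumes W: "wf_conf l d k c" and F: "valid_round l d F" and e: "0 < excess c"
  shows "\<exists>c'. good_move l d k potential F c c'"
proof (cases "\<exists>j<l. 2 \<le> n_occ c j \<and> pedge d j (min_pos c j - 1) \<in> F
                \<and> (min_pos c j < max_pos c j \<or> pnode d j (min_pos c j - 1) \<noteq> c 0)")
  case True
  then show ?thesis using good_move_crowd_up[OF W e] by blast
next
  case nup: False
  show ?thesis
  proof (cases "\<exists>j<l. 2 \<le> n_occ c j \<and> pedge d j (max_pos c j) \<in> F
                  \<and> (min_pos c j < max_pos c j \<or> pnode d j (Suc (max_pos c j)) \<noteq> c 0)")
    case True
    then show ?thesis using good_move_crowd_down[OF W e] by blast
  next
    case False
    then show ?thesis using good_move_all_stalled[OF W F e] stalled_crowdI[OF F] nup by blast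
  qed
qed

lemma good_move_exists:
  assumes W: "wf_conf l d k c" and F: "valid_round l d F"
  shows "\<exists>c'. good_move l d k potential F c c'"
proof (cases "0 < excess c")
  case True then show ?thesis using good_move_excess[OF W F] by blast
next
  case False
  then have e0: "excess c = 0" by simp
  show ?thesis
  proof (cases "c 0 = NP")
    case True then show ?thesis using good_move_source_at_N[OF W F e0] by blast
  next
    case False
    show ?thesis
    proof (cases "c 0 = SP")
      case True then show ?thesis using good_move_source_at_S[OF W F e0] by blast
    next
      case notS: False
      show ?thesis using good_move_source_inside[OF W F e0 False notS] .
    qed
  qed
qed

end

theorem lemma1:
  fixes l k :: nat and d :: "nat \<Rightarrow> nat"
  assumes "l \<ge> 1" and "\<forall>i<l. d i \<ge> 1" and "k \<ge> l"
  shows "\<exists>\<sigma>::strategy. \<forall>p0 A. valid_init l d k p0 \<and> valid_adversary l d A \<longrightarrow>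
           legal_run k \<sigma> p0 A \<and> (\<exists>t. target_config l d k \<sigma> p0 A t)"
proof -
  interpret theta_broadcast l d k using assms by unfold_locales auto
  show ?thesis
    using legal_run_descent_strategy descent_strategy_reaches_target[OF good_move_exists assms(2)]
    by blast
qed

end
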